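(* Let $(M,g)$ be a (CQR)$_n$ pseudo-Riemannian manifold with fundamental vector $A_i$. Then (1) $(\nabla_i A^m) C_{jklm} + (A^m A_m) C_{jkli} = 0$; (2) $(\nabla_i C_{jklm})(\nabla^i C^{jklm}) = 8 (A_iA^i)(C_{jklm}C^{jklm})$; (3) the tensor $\nabla_iA_m$ is Weyl compatible: $(\nabla_i A_m) C_{jkl}{}^m + (\nabla_j A_m) C_{kil}{}^m + (\nabla_k A_m) C_{ijl}{}^m = 0$.
   Context: $(M,g)$ is a connected Hausdorff pseudo-Riemannian manifold of dimension $n\ge 3$ with Levi-Civita connection $\nabla$; indices are raised/lowered with $g$ and repeated indices summed. $R_{jklm}$ is the Riemann tensor, $R_{kl}=-R_{mkl}{}^m$, $R=R^m{}_m$, and the Weyl tensor is $$C_{jklm}=R_{jklm}+\tfrac{1}{n-2}\big(g_{mj}R_{kl}-g_{mk}R_{jl}+R_{mj}g_{kl}-R_{mk}g_{jl}\big)-\tfrac{R}{(n-1)(n-2)}\big(g_{mj}g_{kl}-g_{mk}g_{jl}\big).$$ The manifold is (CQR)$_n$ (conformally quasi-recurrent) if $C_{jklm}\not\equiv 0$ and there is a non-zero vector field $A_i$ (fundamental vector) with $$\nabla_i C_{jklm}=2A_iC_{jklm}+A_jC_{iklm}+A_kC_{jilm}+A_lC_{jkim}+A_mC_{jkli}.$$ *)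

theory Defs
  imports "HOL-Analysis.Analysis"
begin

text \<open>Local-coordinate setting: the manifold is modelled by an open connected
  set U of coordinates in real^'n (dimension n = CARD('n)).\<close>

definition pd :: "'n::finite \<Rightarrow> (real^'n \<Rightarrow> real) \<Rightarrow> real^'n \<Rightarrow> real" where
  "pd i f x = frechet_derivative f (at x) (axis i 1)"

text \<open>C-infinity on U: all iterated partial derivatives exist and are differentiable on U.\<close>
definition smooth_on :: "(real^'n::finite) set \<Rightarrow> (real^'n \<Rightarrow> real) \<Rightarrow> bool" where
  "smooth_on U f \<longleftrightarrow> (\<exists>S. f \<in> S \<and> (\<forall>h\<in>S. h differentiable_on U \<and> (\<forall>i. pd i h \<in> S)))"

type_synonym 'n metric = "real^'n \<Rightarrow> real^'n^'n"

definition pseudo_riemannian :: "(real^'n::finite) set \<Rightarrow> 'n metric \<Rightarrow> bool" where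
  "pseudo_riemannian U g \<longleftrightarrow>
     (\<forall>i j. smooth_on U (\<lambda>x. g x $ i $ j)) \<and>
     (\<forall>x\<in>U. transpose (g x) = g x \<and> det (g x) \<noteq> 0)"

definition ginv :: "'n::finite metric \<Rightarrow> real^'n \<Rightarrow> 'n \<Rightarrow> 'n \<Rightarrow> real" where
  "ginv g x i j = matrix_inv (g x) $ i $ j"

definition christ :: "'n::finite metric \<Rightarrow> 'n \<Rightarrow> 'n \<Rightarrow> 'n \<Rightarrow> real^'n \<Rightarrow> real" where
  "christ g m i j x = (1/2) * (\<Sum>p\<in>UNIV. ginv g x m p *
      (pd i (\<lambda>y. g y $ p $ j) x + pd j (\<lambda>y. g y $ p $ i) x - pd p (\<lambda>y. g y $ i $ j) x))"

definition riem_up :: "'n::finite metric \<Rightarrow> 'n \<Rightarrow> 'n \<Rightarrow> 'n \<Rightarrow> 'n \<Rightarrow> real^'n \<Rightarrow> real" where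
  "riem_up g e k l m x =
     pd l (christ g e k m) x - pd m (christ g e k l) x
     + (\<Sum>p\<in>UNIV. christ g e p l x * christ g p k m x - christ g e p m x * christ g p k l x)"

definition riem :: "'n::finite metric \<Rightarrow> 'n \<Rightarrow> 'n \<Rightarrow> 'n \<Rightarrow> 'n \<Rightarrow> real^'n \<Rightarrow> real" where
  "riem g j k l m x = (\<Sum>e\<in>UNIV. g x $ j $ e * riem_up g e k l m x)"

definition ricci :: "'n::finite metric \<Rightarrow> 'n \<Rightarrow> 'n \<Rightarrow> real^'n \<Rightarrow> real" where
  "ricci g k l x = - (\<Sum>m\<in>UNIV. \<Sum>p\<in>UNIV. ginv g x m p * riem g m k l p x)"

definition scal :: "'n::finite metric \<Rightarrow> real^'n \<Rightarrow> real" where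
  "scal g x = (\<Sum>m\<in>UNIV. \<Sum>p\<in>UNIV. ginv g x m p * ricci g m p x)"

definition weyl :: "'n::finite metric \<Rightarrow> 'n \<Rightarrow> 'n \<Rightarrow> 'n \<Rightarrow> 'n \<Rightarrow> real^'n \<Rightarrow> real" where
  "weyl g j k l m x =
     (let n = real CARD('n) in
      riem g j k l m x
      + (1 / (n - 2)) * (g x $ m $ j * ricci g k l x - g x $ m $ k * ricci g j l x
                         + ricci g m j x * g x $ k $ l - ricci g m k x * g x $ j $ l)
      - scal g x / ((n - 1) * (n - 2)) * (g x $ m $ j * g x $ k $ l - g x $ m $ k * g x $ j $ l))"

definition nabla1 :: "'n::finite metric \<Rightarrow> (real^'n \<Rightarrow> 'n \<Rightarrow> real) \<Rightarrow> 'n \<Rightarrow> 'n \<Rightarrow> real^'n \<Rightarrow> real" where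
  "nabla1 g A i m x = pd i (\<lambda>y. A y m) x - (\<Sum>p\<in>UNIV. christ g p i m x * A x p)"

definition nabla4 :: "'n::finite metric \<Rightarrow> ('n \<Rightarrow> 'n \<Rightarrow> 'n \<Rightarrow> 'n \<Rightarrow> real^'n \<Rightarrow> real)
     \<Rightarrow> 'n \<Rightarrow> 'n \<Rightarrow> 'n \<Rightarrow> 'n \<Rightarrow> 'n \<Rightarrow> real^'n \<Rightarrow> real" where
  "nabla4 g T i j k l m x = pd i (T j k l m) x
     - (\<Sum>p\<in>UNIV. christ g p i j x * T p k l m x + christ g p i k x * T j p l m x
                 + christ g p i l x * T j k p m x + christ g p i m x * T j k l p x)"

text \<open>(CQR)_n with fundamental vector A (given as a covector field A_i).\<close>
definition CQR :: "(real^'n::finite) set \<Rightarrow> 'n metric \<Rightarrow> (real^'n \<Rightarrow> 'n \<Rightarrow> real) \<Rightarrow> bool" where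
  "CQR U g A \<longleftrightarrow>
     (\<exists>x\<in>U. \<exists>j k l m. weyl g j k l m x \<noteq> 0) \<and>
     (\<forall>i. smooth_on U (\<lambda>x. A x i)) \<and>
     (\<exists>x\<in>U. \<exists>i. A x i \<noteq> 0) \<and>
     (\<forall>x\<in>U. \<forall>i j k l m.
        nabla4 g (weyl g) i j k l m x =
          2 * A x i * weyl g j k l m x + A x j * weyl g i k l m x + A x k * weyl g j i l m x
          + A x l * weyl g j k i m x + A x m * weyl g j k l i x)"

end

(* Tracing the recurrence of a (CQR)_n manifold over two slots of the Weyl tensor C, and using
   that C is trace-free for n >= 3 and that covariant differentiation commutes with contractions,
   leaves only contractions of A with C; the algebraic symmetries of C then force
   A^m C_{jklm} = 0, so A^# annihilates every slot of C. Differentiating this identity covariantly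
   and inserting the recurrence once more gives (1), and (3) is (1) combined with the cyclic
   identity of C. For (2), substitute the recurrence into one factor of the square: each of its
   terms contracts A^# into one slot of the covariant derivative of C, which by the recurrence
   and A^m C_{jklm} = 0 returns |A|^2 C (twice that for the derivative slot), so the weights add
   up to 2 * 2 + 1 + 1 + 1 + 1 = 8.

   In the coordinate model all curvature symmetries are derived from the Christoffel symbols; the
   antisymmetry of R in its first pair comes from the symmetry of second partial derivatives of g. *)

theory Submission
  imports Defs
begin

section \<open>Partial derivatives and smooth functions\<close>

lemma pd_eq_has_derivative: "(f has_derivative f') (at x) \<Longrightarrow> pd i f x = f' (axis i 1)"
  unfolding pd_def by (metis frechet_derivative_at)

lemma pd_cong_open:
  assumes "open U" "x \<in> U" "\<And>y. y \<in> U \<Longrightarrow> f y = h y"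
  shows "pd i f x = pd i h x"
proof -
  have "(f has_derivative f') (at x) \<longleftrightarrow> (h has_derivative f') (at x)" for f'
    using assms has_derivative_transform_within_open[of _ _ x UNIV U] by metis
  then show ?thesis unfolding pd_def frechet_derivative_def by simp
qed

lemma pd_const [simp]: "pd i (\<lambda>y. c) x = 0"
  using pd_eq_has_derivative[OF has_derivative_const[where c=c and F="at x"]] by simp

lemma pd_eq_0_on_open:
  assumes "open U" "x \<in> U" "\<And>y. y \<in> U \<Longrightarrow> f y = 0"
  shows "pd i f x = 0"
  using pd_cong_open[OF assms(1,2), of f "\<lambda>y. 0"] assms(3) by simp

lemma pd_add:
  assumes "f differentiable (at x)" "h differentiable (at x)"
  shows "pd i (\<lambda>y. f y + h y) x = pd i f x + pd i h x"
  using pd_eq_has_derivative[OF has_derivative_add[OF assms[unfolded frechet_derivative_works]]]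
  by (simp add: pd_def)

lemma pd_mult:
  fixes f h :: "real^'n::finite \<Rightarrow> real"
  assumes "f differentiable (at x)" "h differentiable (at x)"
  shows "pd i (\<lambda>y. f y * h y) x = pd i f x * h x + f x * pd i h x"
  using pd_eq_has_derivative[OF has_derivative_mult[OF assms[unfolded frechet_derivative_works]]]
  by (simp add: pd_def)

lemma pd_sum:
  fixes f :: "'a \<Rightarrow> real^'n::finite \<Rightarrow> real"
  assumes "finite S" "\<And>p. p \<in> S \<Longrightarrow> f p differentiable (at x)"
  shows "pd i (\<lambda>y. \<Sum>p\<in>S. f p y) x = (\<Sum>p\<in>S. pd i (f p) x)"
  using pd_eq_has_derivative[OF has_derivative_sum[of S f "\<lambda>p. frechet_derivative (f p) (at x)"]] assms
  by (simp add: frechet_derivative_works pd_def)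

inductive_set poly_funs :: "(real^'n::finite \<Rightarrow> real) set \<Rightarrow> (real^'n \<Rightarrow> real) set" for B where
  base: "b \<in> B \<Longrightarrow> b \<in> poly_funs B"
| const: "(\<lambda>y. c) \<in> poly_funs B"
| add: "p \<in> poly_funs B \<Longrightarrow> q \<in> poly_funs B \<Longrightarrow> (\<lambda>y. p y + q y) \<in> poly_funs B"
| mult: "p \<in> poly_funs B \<Longrightarrow> q \<in> poly_funs B \<Longrightarrow> (\<lambda>y. p y * q y) \<in> poly_funs B"

lemma poly_funs_sum:
  "finite S \<Longrightarrow> (\<And>p. p \<in> S \<Longrightarrow> f p \<in> poly_funs B) \<Longrightarrow> (\<lambda>y. \<Sum>p\<in>S. f p y) \<in> poly_funs B"
  by (induction S rule: finite_induct) (auto intro: poly_funs.intros poly_funs.const[of 0, simplified])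

lemma poly_funs_prod:
  "finite S \<Longrightarrow> (\<And>p. p \<in> S \<Longrightarrow> f p \<in> poly_funs B) \<Longrightarrow> (\<lambda>y. \<Prod>p\<in>S. f p y) \<in> poly_funs B"
  by (induction S rule: finite_induct) (auto intro: poly_funs.intros poly_funs.const[of 1, simplified])

lemma poly_funs_det:
  fixes M :: "real^'n::finite \<Rightarrow> real^'m::finite^'m"
  assumes "\<And>i j. (\<lambda>y. M y $ i $ j) \<in> poly_funs B"
  shows "(\<lambda>y. det (M y)) \<in> poly_funs B"
  unfolding det_def
  by (intro poly_funs_sum poly_funs_prod poly_funs.mult[OF poly_funs.const] assms)
     (simp_all add: finite_permutations)

lemma poly_funs_differentiable_on:
  "p \<in> poly_funs B \<Longrightarrow> (\<And>b. b \<in> B \<Longrightarrow> b differentiable_on U) \<Longrightarrow> p differentiable_on U"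
  by (induction rule: poly_funs.induct) auto

definition pd_poly_closed :: "(real^'n::finite) set \<Rightarrow> (real^'n \<Rightarrow> real) set \<Rightarrow> bool" where
  "pd_poly_closed U B \<longleftrightarrow>
     (\<forall>b\<in>B. b differentiable_on U \<and> (\<forall>i. \<exists>q\<in>poly_funs B. \<forall>x\<in>U. pd i b x = q x))"

lemma poly_funs_pd:
  assumes U: "open U" and B: "pd_poly_closed U B" and p: "p \<in> poly_funs B"
  shows "\<exists>q\<in>poly_funs B. \<forall>x\<in>U. pd i p x = q x"
  using p
proof (induction rule: poly_funs.induct)
  case (base b)
  then show ?case using B unfolding pd_poly_closed_def by blast
next
  case (const c)
  show ?case by (rule bexI[OF _ poly_funs.const[of 0]]) simp
next
  case (add p q)
  then obtain p' q' where p': "p' \<in> poly_funs B" "\<forall>x\<in>U. pd i p x = p' x"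
    and q': "q' \<in> poly_funs B" "\<forall>x\<in>U. pd i q x = q' x" by blast
  have "\<forall>x\<in>U. p differentiable at x \<and> q differentiable at x"
    using poly_funs_differentiable_on add.hyps B U differentiable_on_eq_differentiable_at
    unfolding pd_poly_closed_def by metis
  with p' q' show ?case
    by (intro bexI[of _ "\<lambda>y. p' y + q' y"]) (auto simp: pd_add intro: poly_funs.add)
next
  case (mult p q)
  then obtain p' q' where p': "p' \<in> poly_funs B" "\<forall>x\<in>U. pd i p x = p' x"
    and q': "q' \<in> poly_funs B" "\<forall>x\<in>U. pd i q x = q' x" by blast
  have "\<forall>x\<in>U. p differentiable at x \<and> q differentiable at x"
    using poly_funs_differentiable_on mult.hyps B U differentiable_on_eq_differentiable_at
    unfolding pd_poly_closed_def by metis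
  with p' q' mult.hyps show ?case
    by (intro bexI[of _ "\<lambda>y. p' y * q y + p y * q' y"]) (auto simp: pd_mult intro: poly_funs.intros)
qed

text \<open>A witness for smooth_on is a family of functions differentiable on U and closed under
  every pd i: the functions agreeing on U with a polynomial expression in B form one.\<close>
lemma smooth_on_poly_funs:
  assumes U: "open U" and B: "pd_poly_closed U B" and "p \<in> poly_funs B" "\<And>x. x \<in> U \<Longrightarrow> h x = p x"
  shows "smooth_on U h"
proof -
  define S where "S = {h. \<exists>p\<in>poly_funs B. \<forall>x\<in>U. h x = p x}"
  have "h differentiable_on U \<and> (\<forall>i. pd i h \<in> S)" if "h \<in> S" for h
  proof -
    obtain p where p: "p \<in> poly_funs B" "\<forall>x\<in>U. h x = p x" using \<open>h \<in> S\<close> unfolding S_def by blast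
    have "p differentiable_on U"
      using poly_funs_differentiable_on p(1) B unfolding pd_poly_closed_def by blast
    then have "h differentiable_on U"
      using p(2) unfolding differentiable_on_def by (metis differentiable_transform_within zero_less_one)
    moreover have "pd i h \<in> S" for i
    proof -
      obtain q where "q \<in> poly_funs B" "\<forall>x\<in>U. pd i p x = q x" using poly_funs_pd[OF U B p(1)] by blast
      moreover have "\<forall>x\<in>U. pd i h x = pd i p x" using pd_cong_open[OF U] p(2) by blast
      ultimately show ?thesis unfolding S_def by auto
    qed
    ultimately show ?thesis by blast
  qed
  moreover have "h \<in> S" using assms(3,4) unfolding S_def by blast
  ultimately show ?thesis unfolding smooth_on_def by blast
qed

lemma smooth_on_pd: "smooth_on U f \<Longrightarrow> smooth_on U (pd i f)"
  unfolding smooth_on_def by blast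

lemma smooth_on_differentiable: "open U \<Longrightarrow> smooth_on U f \<Longrightarrow> x \<in> U \<Longrightarrow> f differentiable (at x)"
  unfolding smooth_on_def using differentiable_on_eq_differentiable_at by blast

lemma pd_poly_closed_smooth: "pd_poly_closed U {f. smooth_on U f}"
  unfolding pd_poly_closed_def
proof (intro ballI conjI allI)
  fix b assume "b \<in> {f. smooth_on U f}"
  then show "b differentiable_on U" "\<exists>q\<in>poly_funs {f. smooth_on U f}. \<forall>x\<in>U. pd i b x = q x" for i
    by (auto simp: smooth_on_def intro!: bexI[of _ "pd i b"] poly_funs.base smooth_on_pd)
qed

lemma smooth_on_poly:
  "open U \<Longrightarrow> p \<in> poly_funs {f. smooth_on U f} \<Longrightarrow> smooth_on U p"
  using smooth_on_poly_funs[OF _ pd_poly_closed_smooth] by blast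

lemma smooth_on_const: "open U \<Longrightarrow> smooth_on U (\<lambda>y. c)"
  using smooth_on_poly poly_funs.const by blast

lemma smooth_on_add: "open U \<Longrightarrow> smooth_on U f \<Longrightarrow> smooth_on U h \<Longrightarrow> smooth_on U (\<lambda>y. f y + h y)"
  by (rule smooth_on_poly) (auto intro: poly_funs.intros)

lemma smooth_on_mult: "open U \<Longrightarrow> smooth_on U f \<Longrightarrow> smooth_on U h \<Longrightarrow> smooth_on U (\<lambda>y. f y * h y)"
  by (rule smooth_on_poly) (auto intro: poly_funs.intros)

lemma smooth_on_cmult: "open U \<Longrightarrow> smooth_on U f \<Longrightarrow> smooth_on U (\<lambda>y. c * f y)"
  by (rule smooth_on_poly) (auto intro: poly_funs.intros)

lemma smooth_on_diff:
  assumes "open U" "smooth_on U f" "smooth_on U h"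
  shows "smooth_on U (\<lambda>y. f y - h y)"
proof -
  have "(\<lambda>y. f y + (-1) * h y) \<in> poly_funs {f. smooth_on U f}"
    using assms by (intro poly_funs.add poly_funs.mult poly_funs.const poly_funs.base) auto
  then show ?thesis using smooth_on_poly[OF assms(1)] by simp
qed

lemma smooth_on_uminus: "open U \<Longrightarrow> smooth_on U f \<Longrightarrow> smooth_on U (\<lambda>y. - f y)"
  using smooth_on_cmult[of U f "-1"] by simp

lemma smooth_on_sum:
  "open U \<Longrightarrow> finite S \<Longrightarrow> (\<And>p. p \<in> S \<Longrightarrow> smooth_on U (f p)) \<Longrightarrow> smooth_on U (\<lambda>y. \<Sum>p\<in>S. f p y)"
  by (rule smooth_on_poly) (auto intro: poly_funs_sum poly_funs.base)

lemma smooth_on_divide_const: "open U \<Longrightarrow> smooth_on U f \<Longrightarrow> smooth_on U (\<lambda>y. f y / c)"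
  using smooth_on_cmult[of U f "inverse c"] by (simp add: divide_inverse mult.commute)

lemma pd_poly_closed_insert_inverse:
  assumes U: "open U" and d: "smooth_on U d" and nz: "\<And>x. x \<in> U \<Longrightarrow> d x \<noteq> 0"
  shows "pd_poly_closed U (insert (\<lambda>y. inverse (d y)) {f. smooth_on U f})" (is "pd_poly_closed U ?B")
proof -
  have inv_deriv: "((\<lambda>y. inverse (d y)) has_derivative
      (\<lambda>h. - (inverse (d x) * frechet_derivative d (at x) h * inverse (d x)))) (at x)" if "x \<in> U" for x
    by (rule Deriv.has_derivative_inverse[where f=d, OF nz[OF that]])
       (use smooth_on_differentiable[OF U d that] frechet_derivative_works in blast)
  have "(\<lambda>y. inverse (d y)) differentiable_on U"
    using inv_deriv by (meson differentiable_at_imp_differentiable_on differentiable_def)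
  moreover have "\<exists>q\<in>poly_funs ?B. \<forall>x\<in>U. pd k (\<lambda>y. inverse (d y)) x = q x" for k
  proof
    show "\<forall>x\<in>U. pd k (\<lambda>y. inverse (d y)) x = (-1) * (inverse (d x) * (pd k d x * inverse (d x)))"
      using pd_eq_has_derivative[OF inv_deriv] by (simp add: pd_def)
    show "(\<lambda>x. (-1) * (inverse (d x) * (pd k d x * inverse (d x)))) \<in> poly_funs ?B"
      using smooth_on_pd[OF d] by (intro poly_funs.intros) auto
  qed
  moreover have "b differentiable_on U \<and> (\<forall>k. \<exists>q\<in>poly_funs ?B. \<forall>x\<in>U. pd k b x = q x)"
    if "smooth_on U b" for b
    using that smooth_on_pd[OF that] unfolding smooth_on_def by (blast intro: poly_funs.base)
  ultimately show ?thesis unfolding pd_poly_closed_def by blast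
qed

section \<open>Symmetry of second partial derivatives\<close>

lemma has_real_derivative_along_line:
  fixes f :: "real^'n::finite \<Rightarrow> real"
  assumes "f differentiable (at (a + s *\<^sub>R v))"
  shows "((\<lambda>s. f (a + s *\<^sub>R v)) has_real_derivative frechet_derivative f (at (a + s *\<^sub>R v)) v) (at s)"
proof -
  let ?F = "frechet_derivative f (at (a + s *\<^sub>R v))"
  have line: "((\<lambda>s. a + s *\<^sub>R v) has_derivative (\<lambda>h. h *\<^sub>R v)) (at s)"
    by (auto intro!: derivative_eq_intros)
  have F: "(f has_derivative ?F) (at ((\<lambda>s. a + s *\<^sub>R v) s))"
    using assms[unfolded frechet_derivative_works] by simp
  have "((f \<circ> (\<lambda>s. a + s *\<^sub>R v)) has_derivative (?F \<circ> (\<lambda>h. h *\<^sub>R v))) (at s)"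
    by (rule diff_chain_at[OF line F])
  moreover have "linear ?F" using F has_derivative_linear by blast
  ultimately show ?thesis
    by (simp add: o_def has_derivative_imp_has_field_derivative linear_scale)
qed

lemma second_difference_mvt:
  fixes f :: "real^'n::finite \<Rightarrow> real" and i :: 'n
  defines "e \<equiv> axis i 1"
  assumes t: "t > 0"
    and df: "\<And>s. 0 \<le> s \<Longrightarrow> s \<le> t \<Longrightarrow>
      f differentiable (at (x + t *\<^sub>R d + s *\<^sub>R e)) \<and> f differentiable (at (x + s *\<^sub>R e))"
  obtains \<xi> where "0 < \<xi>" "\<xi> < t"
    "f (x + t *\<^sub>R e + t *\<^sub>R d) - f (x + t *\<^sub>R e) - f (x + t *\<^sub>R d) + f x
       = t * (pd i f (x + t *\<^sub>R d + \<xi> *\<^sub>R e) - pd i f (x + \<xi> *\<^sub>R e))"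
proof -
  define \<phi> where "\<phi> s = f (x + t *\<^sub>R d + s *\<^sub>R e) - f (x + s *\<^sub>R e)" for s
  define \<phi>' where "\<phi>' s = pd i f (x + t *\<^sub>R d + s *\<^sub>R e) - pd i f (x + s *\<^sub>R e)" for s
  have "DERIV \<phi> s :> \<phi>' s" if "0 \<le> s" "s \<le> t" for s
    using DERIV_diff[OF has_real_derivative_along_line has_real_derivative_along_line,
        OF conjunct1[OF df[OF that]] conjunct2[OF df[OF that]]]
    unfolding \<phi>_def \<phi>'_def pd_def e_def by simp
  then obtain \<xi> where "0 < \<xi>" "\<xi> < t" "\<phi> t - \<phi> 0 = (t - 0) * \<phi>' \<xi>"
    using MVT2[of 0 t \<phi> \<phi>'] t by auto
  moreover have "\<phi> t - \<phi> 0 = f (x + t *\<^sub>R e + t *\<^sub>R d) - f (x + t *\<^sub>R e) - f (x + t *\<^sub>R d) + f x"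
    unfolding \<phi>_def by (simp add: algebra_simps)
  ultimately show ?thesis using that unfolding \<phi>'_def by simp
qed

lemma second_difference_quotient_estimate:
  fixes f :: "real^'n::finite \<Rightarrow> real" and i j :: 'n
  defines "e \<equiv> axis i 1" and "d \<equiv> axis j 1"
  assumes t: "t > 0" and \<epsilon>: "\<epsilon> > 0" and lin: "linear D"
    and near: "\<And>y. norm (y - x) \<le> 2 * t \<Longrightarrow>
      f differentiable (at y) \<and> \<bar>pd i f y - pd i f x - D (y - x)\<bar> \<le> \<epsilon> / 8 * norm (y - x)"
  shows "\<bar>(f (x + t *\<^sub>R e + t *\<^sub>R d) - f (x + t *\<^sub>R e) - f (x + t *\<^sub>R d) + f x) / t\<^sup>2 - D d\<bar> < \<epsilon>"
proof -
  have n1: "norm (x + t *\<^sub>R d + s *\<^sub>R e - x) \<le> 2 * t" if "0 \<le> s" "s \<le> t" for s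
    using norm_triangle_ineq[of "t *\<^sub>R d" "s *\<^sub>R e"] that t by (simp add: d_def e_def)
  have n2: "norm (x + s *\<^sub>R e - x) \<le> 2 * t" if "0 \<le> s" "s \<le> t" for s
    using that t by (simp add: e_def)
  obtain \<xi> where \<xi>: "0 < \<xi>" "\<xi> < t"
    and Delta: "f (x + t *\<^sub>R e + t *\<^sub>R d) - f (x + t *\<^sub>R e) - f (x + t *\<^sub>R d) + f x
        = t * (pd i f (x + t *\<^sub>R d + \<xi> *\<^sub>R e) - pd i f (x + \<xi> *\<^sub>R e))"
    using second_difference_mvt[of t f x d i, folded e_def] t near n1 n2 by blast
  define y1 where "y1 = x + t *\<^sub>R d + \<xi> *\<^sub>R e"
  define y2 where "y2 = x + \<xi> *\<^sub>R e"
  define err where "err y = pd i f y - pd i f x - D (y - x)" for y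
  have err_le: "\<bar>err y\<bar> \<le> \<epsilon> * t / 4" if "norm (y - x) \<le> 2 * t" for y
  proof -
    have "\<bar>err y\<bar> \<le> (\<epsilon>/8) * norm (y - x)" using near[OF that] unfolding err_def by blast
    also have "\<dots> \<le> (\<epsilon>/8) * (2 * t)" using that \<epsilon> by (intro mult_left_mono) auto
    finally show ?thesis by simp
  qed
  have "D (y1 - x) - D (y2 - x) = t * D d"
    unfolding y1_def y2_def by (simp add: linear_add[OF lin] linear_scale[OF lin])
  then have "pd i f y1 - pd i f y2 - t * D d = err y1 - err y2"
    unfolding err_def by simp
  moreover have "\<bar>err y1\<bar> \<le> \<epsilon> * t / 4" "\<bar>err y2\<bar> \<le> \<epsilon> * t / 4"
    using err_le n1[of \<xi>] n2[of \<xi>] \<xi> unfolding y1_def y2_def by simp_all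
  ultimately have "\<bar>pd i f y1 - pd i f y2 - t * D d\<bar> < \<epsilon> * t"
    using abs_triangle_ineq4[of "err y1" "err y2"] mult_pos_pos[OF \<epsilon> t] by simp
  moreover have "(t * (pd i f y1 - pd i f y2)) / t\<^sup>2 - D d = (pd i f y1 - pd i f y2 - t * D d) / t"
    using t by (simp add: power2_eq_square field_simps)
  ultimately show ?thesis
    using Delta t unfolding y1_def y2_def by (simp add: abs_divide pos_divide_less_eq)
qed

lemma second_difference_tendsto_pd_pd:
  fixes f :: "real^'n::finite \<Rightarrow> real"
  assumes U: "open U" and x: "x \<in> U" and fd: "\<And>y. y \<in> U \<Longrightarrow> f differentiable (at y)"
    and gd: "pd i f differentiable (at x)"
  shows "((\<lambda>t. (f (x + t *\<^sub>R axis i 1 + t *\<^sub>R axis j 1) - f (x + t *\<^sub>R axis i 1)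
              - f (x + t *\<^sub>R axis j 1) + f x) / t\<^sup>2) \<longlongrightarrow> pd j (pd i f) x) (at_right 0)"
proof (rule tendstoI)
  fix \<epsilon> :: real assume \<epsilon>: "\<epsilon> > 0"
  define D where "D = frechet_derivative (pd i f) (at x)"
  have hD: "(pd i f has_derivative D) (at x)" unfolding D_def using gd frechet_derivative_works by blast
  have Dd: "D (axis j 1) = pd j (pd i f) x" unfolding D_def pd_def by simp
  obtain r where r: "r > 0" "ball x r \<subseteq> U" using U x open_contains_ball by blast
  obtain \<delta> where \<delta>: "\<delta> > 0" "\<And>y. norm (y - x) < \<delta> \<Longrightarrow>
      norm (pd i f y - pd i f x - D (y - x)) \<le> (\<epsilon>/8) * norm (y - x)"
    using hD[unfolded has_derivative_at_alt] \<epsilon> by (metis divide_pos_pos zero_less_numeral)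
  have "\<bar>(f (x + t *\<^sub>R axis i 1 + t *\<^sub>R axis j 1) - f (x + t *\<^sub>R axis i 1) - f (x + t *\<^sub>R axis j 1) + f x)
      / t\<^sup>2 - D (axis j 1)\<bar> < \<epsilon>" if t: "0 < t" "t < min \<delta> r / 2" for t
  proof (rule second_difference_quotient_estimate[OF t(1) \<epsilon> has_derivative_linear[OF hD]])
    fix y assume "norm (y - x) \<le> 2 * t"
    then have "norm (y - x) < \<delta>" "dist x y < r"
      using t by (simp_all add: dist_norm norm_minus_commute)
    then show "f differentiable (at y) \<and> \<bar>pd i f y - pd i f x - D (y - x)\<bar> \<le> \<epsilon> / 8 * norm (y - x)"
      using fd r(2) \<delta>(2) by auto
  qed
  moreover have "min \<delta> r / 2 > 0" using \<delta> r by simp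
  ultimately show "\<forall>\<^sub>F t in at_right 0. dist ((f (x + t *\<^sub>R axis i 1 + t *\<^sub>R axis j 1)
      - f (x + t *\<^sub>R axis i 1) - f (x + t *\<^sub>R axis j 1) + f x) / t\<^sup>2) (pd j (pd i f) x) < \<epsilon>"
    unfolding eventually_at_right_field dist_real_def Dd[symmetric] by blast
qed

theorem pd_pd_commute:
  fixes f :: "real^'n::finite \<Rightarrow> real"
  assumes "open U" "x \<in> U" "\<And>y. y \<in> U \<Longrightarrow> f differentiable (at y)"
    and "pd i f differentiable (at x)" "pd j f differentiable (at x)"
  shows "pd j (pd i f) x = pd i (pd j f) x"
proof -
  have "(\<lambda>t. (f (x + t *\<^sub>R axis j 1 + t *\<^sub>R axis i 1) - f (x + t *\<^sub>R axis j 1)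
              - f (x + t *\<^sub>R axis i 1) + f x) / t\<^sup>2) =
        (\<lambda>t. (f (x + t *\<^sub>R axis i 1 + t *\<^sub>R axis j 1) - f (x + t *\<^sub>R axis i 1)
              - f (x + t *\<^sub>R axis j 1) + f x) / t\<^sup>2)"
    by (simp add: algebra_simps)
  then show ?thesis
    using tendsto_unique[OF trivial_limit_at_right_real second_difference_tendsto_pd_pd[OF assms(1-4), of j]]
      second_difference_tendsto_pd_pd[OF assms(1-3,5), of i]
    by simp
qed

lemma smooth_on_pd_pd_commute:
  "open U \<Longrightarrow> x \<in> U \<Longrightarrow> smooth_on U f \<Longrightarrow> pd j (pd i f) x = pd i (pd j f) x"
  by (rule pd_pd_commute) (auto intro: smooth_on_differentiable smooth_on_pd)

section \<open>Index sums\<close>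

lemma sum_mult_delta [simp]:
  fixes f :: "'a::finite \<Rightarrow> 'b::semiring_1"
  shows "(\<Sum>q\<in>UNIV. f q * (if q = k then 1 else 0)) = f k"
    and "(\<Sum>q\<in>UNIV. f q * (if k = q then 1 else 0)) = f k"
    and "(\<Sum>q\<in>UNIV. (if q = k then 1 else 0) * f q) = f k"
    and "(\<Sum>q\<in>UNIV. (if k = q then 1 else 0) * f q) = f k"
  by (simp_all add: if_distrib[of "times _"] if_distrib[of "\<lambda>c. c * _"] cong: if_cong)

lemma sum_sum_antisym_eq_0:
  fixes F :: "'a \<Rightarrow> 'a \<Rightarrow> real"
  assumes "\<And>p q. F q p = - F p q"
  shows "(\<Sum>p\<in>A. \<Sum>q\<in>A. F p q) = 0"
proof -
  have "(\<Sum>p\<in>A. \<Sum>q\<in>A. F p q) = (\<Sum>q\<in>A. \<Sum>p\<in>A. - F q p)"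
    by (subst sum.swap) (intro sum.cong refl assms)
  then show ?thesis by (simp add: sum_negf)
qed

lemma sum_rotate3:
  "(\<Sum>a\<in>A. \<Sum>b\<in>B. \<Sum>c\<in>C. f a b c) = (\<Sum>b\<in>B. \<Sum>c\<in>C. \<Sum>a\<in>A. f a b c)"
  by (subst sum.swap) (simp only: sum.swap[of _ A C])

lemma sum_rotate4:
  "(\<Sum>a\<in>A. \<Sum>b\<in>B. \<Sum>c\<in>C. \<Sum>d\<in>D. f a b c d) = (\<Sum>b\<in>B. \<Sum>c\<in>C. \<Sum>d\<in>D. \<Sum>a\<in>A. f a b c d)"
  by (rule trans[OF sum.swap sum.cong[OF refl sum_rotate3]])

lemma sum_rotate5:
  "(\<Sum>a\<in>A. \<Sum>b\<in>B. \<Sum>c\<in>C. \<Sum>d\<in>D. \<Sum>e\<in>E. f a b c d e)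
     = (\<Sum>b\<in>B. \<Sum>c\<in>C. \<Sum>d\<in>D. \<Sum>e\<in>E. \<Sum>a\<in>A. f a b c d e)"
  by (rule trans[OF sum.swap sum.cong[OF refl sum_rotate4]])

lemma sum_product_sum4:
  fixes f :: "'a \<Rightarrow> 'r::comm_semiring_1"
  shows "(\<Sum>x\<in>X. f x) * (\<Sum>a\<in>A. \<Sum>b\<in>B. \<Sum>c\<in>C. \<Sum>d\<in>D. h a b c d) =
    (\<Sum>x\<in>X. \<Sum>a\<in>A. \<Sum>b\<in>B. \<Sum>c\<in>C. \<Sum>d\<in>D. f x * h a b c d)"
  by (simp only: sum_distrib_right) (simp only: sum_distrib_left)

lemma sum_swap_1_3:
  "(\<Sum>a\<in>A. \<Sum>b\<in>B. \<Sum>c\<in>C. f a b c) = (\<Sum>c\<in>C. \<Sum>b\<in>B. \<Sum>a\<in>A. f a b c)"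
  by (rule trans[OF sum_rotate3 sum.swap])

lemma sum_swap_1_4:
  "(\<Sum>a\<in>A. \<Sum>b\<in>B. \<Sum>c\<in>C. \<Sum>d\<in>D. f a b c d) = (\<Sum>d\<in>D. \<Sum>b\<in>B. \<Sum>c\<in>C. \<Sum>a\<in>A. f a b c d)"
  by (rule trans[OF sum_rotate4 sum_rotate3[symmetric]])

lemma sum_swap_1_5:
  "(\<Sum>a\<in>A. \<Sum>b\<in>B. \<Sum>c\<in>C. \<Sum>d\<in>D. \<Sum>e\<in>E. f a b c d e)
     = (\<Sum>e\<in>E. \<Sum>b\<in>B. \<Sum>c\<in>C. \<Sum>d\<in>D. \<Sum>a\<in>A. f a b c d e)"
  by (rule trans[OF sum_rotate5 sum_rotate4[symmetric]])

section \<open>The metric and its inverse\<close>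

lemma matrix_mul_matrix_inv:
  fixes A :: "real^'n::finite^'n"
  assumes "det A \<noteq> 0"
  shows "A ** matrix_inv A = mat 1" and "matrix_inv A ** A = mat 1"
proof -
  have "\<exists>A'. A ** A' = mat 1 \<and> A' ** A = mat 1"
    using assms invertible_det_nz unfolding invertible_def by blast
  then have "A ** matrix_inv A = mat 1 \<and> matrix_inv A ** A = mat 1"
    unfolding matrix_inv_def by (rule someI_ex)
  then show "A ** matrix_inv A = mat 1" "matrix_inv A ** A = mat 1" by auto
qed

lemma symmetric_matrix_inv:
  fixes A :: "real^'n::finite^'n"
  assumes "det A \<noteq> 0" "transpose A = A"
  shows "transpose (matrix_inv A) = matrix_inv A"
proof -
  have "transpose (matrix_inv A) ** A = mat 1"
    using arg_cong[OF matrix_mul_matrix_inv(1)[OF assms(1)], of transpose] assms(2)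
    by (simp add: matrix_transpose_mul)
  then have "transpose (matrix_inv A) = (transpose (matrix_inv A) ** A) ** matrix_inv A"
    using matrix_mul_matrix_inv(1)[OF assms(1)] by (metis matrix_mul_assoc matrix_mul_rid)
  then show ?thesis using \<open>transpose (matrix_inv A) ** A = mat 1\<close> by simp
qed

lemma matrix_inv_cramer:
  fixes A :: "real^'n::finite^'n"
  assumes "det A \<noteq> 0"
  shows "matrix_inv A $ k $ j = det (\<chi> a b. if b = k then axis j 1 $ a else A $ a $ b) / det A"
proof -
  have "A *v (matrix_inv A *v axis j 1) = axis j 1"
    by (simp add: matrix_vector_mul_assoc matrix_mul_matrix_inv(1)[OF assms])
  then have "matrix_inv A *v axis j 1 = (\<chi> k. det (\<chi> a b. if b = k then axis j 1 $ a else A $ a $ b) / det A)"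
    using cramer[OF assms] by blast
  moreover have "(matrix_inv A *v axis j 1) $ k = matrix_inv A $ k $ j"
    by (simp add: matrix_vector_mult_def axis_def if_distrib cong: if_cong)
  ultimately show ?thesis by simp
qed

locale pseudo_riemannian_chart =
  fixes U :: "(real^'n::finite) set" and g :: "'n metric"
  assumes open_U: "open U" and pseudo_riemannian: "pseudo_riemannian U g"
begin

lemma smooth_metric: "smooth_on U (\<lambda>x. g x $ i $ j)"
  using pseudo_riemannian unfolding pseudo_riemannian_def by blast

lemma transpose_metric: "x \<in> U \<Longrightarrow> transpose (g x) = g x"
  using pseudo_riemannian unfolding pseudo_riemannian_def by blast

lemma det_metric_nz: "x \<in> U \<Longrightarrow> det (g x) \<noteq> 0"
  using pseudo_riemannian unfolding pseudo_riemannian_def by blast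

lemma metric_sym: "x \<in> U \<Longrightarrow> g x $ i $ j = g x $ j $ i"
  using arg_cong[where f="\<lambda>M. M $ j $ i", OF transpose_metric] by (simp add: transpose_def)

lemma ginv_sym: "x \<in> U \<Longrightarrow> ginv g x i j = ginv g x j i"
  using arg_cong[where f="\<lambda>M. M $ j $ i", OF symmetric_matrix_inv[OF det_metric_nz transpose_metric]]
  unfolding ginv_def by (simp add: transpose_def)

lemma metric_ginv: "x \<in> U \<Longrightarrow> (\<Sum>p\<in>UNIV. g x $ i $ p * ginv g x p j) = (if i = j then 1 else 0)"
  using arg_cong[where f="\<lambda>M. M $ i $ j", OF matrix_mul_matrix_inv(1)[OF det_metric_nz]]
  unfolding ginv_def by (simp add: matrix_matrix_mult_def mat_def)

lemma ginv_metric: "x \<in> U \<Longrightarrow> (\<Sum>p\<in>UNIV. ginv g x i p * g x $ p $ j) = (if i = j then 1 else 0)"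
  using arg_cong[where f="\<lambda>M. M $ i $ j", OF matrix_mul_matrix_inv(2)[OF det_metric_nz]]
  unfolding ginv_def by (simp add: matrix_matrix_mult_def mat_def)

lemma ginv_contract_metric:
  assumes x: "x \<in> U"
  shows "(\<Sum>j\<in>UNIV. \<Sum>m\<in>UNIV. ginv g x j m * (g x $ m $ k * X j)) = X k"
    and "(\<Sum>j\<in>UNIV. \<Sum>m\<in>UNIV. ginv g x j m * (Y m * g x $ j $ l)) = Y l"
proof -
  have "(\<Sum>j\<in>UNIV. \<Sum>m\<in>UNIV. ginv g x j m * (g x $ m $ k * X j))
      = (\<Sum>j\<in>UNIV. X j * (\<Sum>m\<in>UNIV. ginv g x j m * g x $ m $ k))"
    by (simp add: sum_distrib_left mult_ac)
  then show "(\<Sum>j\<in>UNIV. \<Sum>m\<in>UNIV. ginv g x j m * (g x $ m $ k * X j)) = X k"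
    by (simp add: ginv_metric[OF x])
  have "(\<Sum>j\<in>UNIV. \<Sum>m\<in>UNIV. ginv g x j m * (Y m * g x $ j $ l))
      = (\<Sum>m\<in>UNIV. Y m * (\<Sum>j\<in>UNIV. ginv g x m j * g x $ j $ l))"
    by (subst sum.swap) (simp add: sum_distrib_left mult_ac ginv_sym[OF x, of _ m for m])
  then show "(\<Sum>j\<in>UNIV. \<Sum>m\<in>UNIV. ginv g x j m * (Y m * g x $ j $ l)) = Y l"
    by (simp add: ginv_metric[OF x])
qed

text \<open>By Cramer's rule the entries of the inverse metric are polynomials in the entries of g
  and in 1 / det g.\<close>
lemma smooth_ginv: "smooth_on U (\<lambda>x. ginv g x i j)"
proof -
  let ?S = "{f. smooth_on U f}"
  let ?B = "insert (\<lambda>y. inverse (det (g y))) ?S"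
  have g_poly: "(\<lambda>y. g y $ a $ b) \<in> poly_funs ?B" for a b
    using smooth_metric by (auto intro: poly_funs.base)
  have "pd_poly_closed U ?B"
    using pd_poly_closed_insert_inverse[OF open_U smooth_on_poly[OF open_U poly_funs_det]]
      smooth_metric det_metric_nz by (auto intro: poly_funs.base)
  moreover have "(\<lambda>y. det (\<chi> a b. if b = i then axis j 1 $ a else g y $ a $ b) * inverse (det (g y)))
      \<in> poly_funs ?B"
  proof (intro poly_funs.mult[OF poly_funs_det poly_funs.base])
    show "(\<lambda>y. (\<chi> a b. if b = i then axis j 1 $ a else g y $ a $ b) $ a $ b) \<in> poly_funs ?B" for a b
      using g_poly[of a b] poly_funs.const by (cases "b = i") auto
  qed simp
  ultimately show ?thesis
    by (rule smooth_on_poly_funs[OF open_U])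
       (simp add: ginv_def matrix_inv_cramer[OF det_metric_nz] divide_inverse)
qed

lemmas smooth_intros =
  smooth_on_add[OF open_U] smooth_on_diff[OF open_U] smooth_on_mult[OF open_U]
  smooth_on_cmult[OF open_U] smooth_on_const[OF open_U] smooth_on_uminus[OF open_U]
  smooth_on_divide_const[OF open_U] smooth_on_sum[OF open_U finite]
  smooth_on_pd smooth_metric smooth_ginv

lemma smooth_christ: "smooth_on U (christ g m i j)"
  unfolding christ_def[abs_def] by (intro smooth_intros)

lemma smooth_riem: "smooth_on U (riem g j k l m)"
  unfolding riem_def[abs_def] riem_up_def by (intro smooth_intros smooth_christ)

lemma smooth_ricci: "smooth_on U (ricci g k l)"
  unfolding ricci_def[abs_def] by (intro smooth_intros smooth_riem)

lemma smooth_scal: "smooth_on U (scal g)"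
  unfolding scal_def[abs_def] by (intro smooth_intros smooth_ricci)

lemma smooth_weyl: "smooth_on U (weyl g j k l m)"
  unfolding weyl_def[abs_def] Let_def by (intro smooth_intros smooth_riem smooth_ricci smooth_scal)

lemmas differentiable_metric = smooth_on_differentiable[OF open_U smooth_metric]
lemmas differentiable_ginv = smooth_on_differentiable[OF open_U smooth_ginv]
lemmas differentiable_christ = smooth_on_differentiable[OF open_U smooth_christ]
lemmas differentiable_weyl = smooth_on_differentiable[OF open_U smooth_weyl]

section \<open>Christoffel symbols and curvature\<close>

lemma pd_metric_sym: "x \<in> U \<Longrightarrow> pd p (\<lambda>y. g y $ i $ j) x = pd p (\<lambda>y. g y $ j $ i) x"
  by (rule pd_cong_open[OF open_U]) (auto simp: metric_sym)

lemma christ_sym: "x \<in> U \<Longrightarrow> christ g m i j x = christ g m j i x"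
  unfolding christ_def using pd_metric_sym by (simp add: algebra_simps)

lemma pd_christ_sym: "x \<in> U \<Longrightarrow> pd l (christ g m i j) x = pd l (christ g m j i) x"
  by (rule pd_cong_open[OF open_U]) (auto simp: christ_sym)

lemma christ_lower: "x \<in> U \<Longrightarrow> (\<Sum>p\<in>UNIV. christ g p i j x * g x $ p $ k) =
   (1/2) * (pd i (\<lambda>y. g y $ k $ j) x + pd j (\<lambda>y. g y $ k $ i) x - pd k (\<lambda>y. g y $ i $ j) x)"
proof -
  assume x: "x \<in> U"
  define D where "D q = pd i (\<lambda>y. g y $ q $ j) x + pd j (\<lambda>y. g y $ q $ i) x - pd q (\<lambda>y. g y $ i $ j) x" for q
  have "(\<Sum>p\<in>UNIV. christ g p i j x * g x $ p $ k) = (\<Sum>p\<in>UNIV. \<Sum>q\<in>UNIV. (1/2) * (ginv g x p q * D q * g x $ p $ k))"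
    unfolding christ_def D_def by (simp add: sum_distrib_left sum_distrib_right mult_ac)
  also have "\<dots> = (\<Sum>q\<in>UNIV. ((1/2) * D q) * (\<Sum>p\<in>UNIV. ginv g x q p * g x $ p $ k))"
    by (subst sum.swap) (simp add: sum_distrib_left ginv_sym[OF x] mult_ac)
  also have "\<dots> = (1/2) * D k"
    by (simp only: ginv_metric[OF x] sum_mult_delta)
  finally show ?thesis unfolding D_def .
qed

lemma pd_metric: "x \<in> U \<Longrightarrow> pd i (\<lambda>y. g y $ j $ k) x =
   (\<Sum>p\<in>UNIV. christ g p i j x * g x $ p $ k + christ g p i k x * g x $ j $ p)"
proof -
  assume x: "x \<in> U"
  have "(\<Sum>p\<in>UNIV. christ g p i j x * g x $ p $ k + christ g p i k x * g x $ j $ p) =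
        (\<Sum>p\<in>UNIV. christ g p i j x * g x $ p $ k) + (\<Sum>p\<in>UNIV. christ g p i k x * g x $ p $ j)"
    by (simp add: sum.distrib metric_sym[OF x, of j])
  also have "\<dots> = pd i (\<lambda>y. g y $ j $ k) x"
    unfolding christ_lower[OF x] using pd_metric_sym[OF x] by (simp add: algebra_simps)
  finally show ?thesis by simp
qed

lemma pd_ginv: "x \<in> U \<Longrightarrow> pd i (\<lambda>y. ginv g y m p) x =
   - (\<Sum>q\<in>UNIV. christ g m i q x * ginv g x q p + christ g p i q x * ginv g x m q)"
proof -
  assume x: "x \<in> U"
  define dG where "dG a = pd i (\<lambda>y. ginv g y m a) x" for a
  define dg where "dg a b = pd i (\<lambda>y. g y $ a $ b) x" for a b
  define G where "G a b = ginv g x a b" for a b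
  define gg where "gg a b = g x $ a $ b" for a b
  define C where "C q a b = christ g q a b x" for q a b
  have dG_g: "(\<Sum>a\<in>UNIV. dG a * gg a b) = - (\<Sum>a\<in>UNIV. G m a * dg a b)" for b
  proof -
    have "pd i (\<lambda>y. \<Sum>a\<in>UNIV. ginv g y m a * g y $ a $ b) x = pd i (\<lambda>y. if m = b then 1 else 0) x"
      by (rule pd_cong_open[OF open_U x]) (simp add: ginv_metric)
    moreover have "pd i (\<lambda>y. \<Sum>a\<in>UNIV. ginv g y m a * g y $ a $ b) x =
        (\<Sum>a\<in>UNIV. dG a * gg a b + G m a * dg a b)"
      using x by (simp add: pd_sum pd_mult differentiable_ginv differentiable_metric differentiable_mult
          dG_def dg_def G_def gg_def)
    ultimately show ?thesis by (simp add: sum.distrib eq_neg_iff_add_eq_0)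
  qed
  have "dG p = (\<Sum>a\<in>UNIV. dG a * (\<Sum>b\<in>UNIV. gg a b * G b p))"
    unfolding gg_def G_def by (simp add: metric_ginv[OF x])
  also have "\<dots> = (\<Sum>b\<in>UNIV. (\<Sum>a\<in>UNIV. dG a * gg a b) * G b p)"
    by (simp add: sum_distrib_left sum_distrib_right mult_ac) (rule sum.swap)
  also have "\<dots> = - (\<Sum>b\<in>UNIV. \<Sum>a\<in>UNIV. G m a * dg a b * G b p)"
    by (simp add: dG_g sum_distrib_right sum_negf)
  also have "\<dots> = - (\<Sum>b\<in>UNIV. \<Sum>a\<in>UNIV. \<Sum>q\<in>UNIV. G m a * C q i a * gg q b * G b p
         + G m a * gg a q * C q i b * G b p)"
    unfolding dg_def pd_metric[OF x]
    by (simp add: sum_distrib_left sum_distrib_right distrib_left distrib_right C_def gg_def mult_ac)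
  also have "\<dots> = - ((\<Sum>a\<in>UNIV. \<Sum>q\<in>UNIV. G m a * C q i a * (\<Sum>b\<in>UNIV. gg q b * G b p))
         + (\<Sum>b\<in>UNIV. \<Sum>q\<in>UNIV. (\<Sum>a\<in>UNIV. G m a * gg a q) * (C q i b * G b p)))"
    unfolding sum.distrib sum_rotate3[of _ UNIV UNIV UNIV, where f="\<lambda>b a q. G m a * C q i a * gg q b * G b p"]
      sum.swap[of "\<lambda>a q. G m a * gg a q * C q i _ * G _ p"]
    by (simp add: sum_distrib_left sum_distrib_right mult_ac)
  also have "\<dots> = - ((\<Sum>a\<in>UNIV. G m a * C p i a) + (\<Sum>b\<in>UNIV. C m i b * G b p))"
    unfolding gg_def G_def by (simp only: metric_ginv[OF x] ginv_metric[OF x] sum_mult_delta)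
  finally show ?thesis unfolding dG_def G_def C_def by (simp add: sum.distrib mult_ac)
qed

lemma riem_up_antisym_34: "riem_up g e k l m x = - riem_up g e k m l x"
  unfolding riem_up_def by (simp add: sum_subtractf)

lemma riem_antisym_34: "riem g j k l m x = - riem g j k m l x"
  unfolding riem_def by (simp add: riem_up_antisym_34[of _ k l m x] sum_negf)

lemma riem_up_bianchi: "x \<in> U \<Longrightarrow> riem_up g e k l m x + riem_up g e l m k x + riem_up g e m k l x = 0"
proof -
  assume x: "x \<in> U"
  have "pd l (christ g e k m) x = pd l (christ g e m k) x" "pd m (christ g e k l) x = pd m (christ g e l k) x"
    "pd k (christ g e l m) x = pd k (christ g e m l) x" using pd_christ_sym[OF x] by auto
  moreover have "(\<Sum>p\<in>UNIV. christ g e p l x * christ g p k m x - christ g e p m x * christ g p k l x)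
     + (\<Sum>p\<in>UNIV. christ g e p m x * christ g p l k x - christ g e p k x * christ g p l m x)
     + (\<Sum>p\<in>UNIV. christ g e p k x * christ g p m l x - christ g e p l x * christ g p m k x) = 0"
    by (simp add: sum.distrib[symmetric] christ_sym[OF x, of _ l k] christ_sym[OF x, of _ m k]
        christ_sym[OF x, of _ m l])
  ultimately show ?thesis unfolding riem_up_def by linarith
qed

lemma riem_bianchi: "x \<in> U \<Longrightarrow> riem g j k l m x + riem g j l m k x + riem g j m k l x = 0"
proof -
  assume x: "x \<in> U"
  have "riem g j k l m x + riem g j l m k x + riem g j m k l x =
     (\<Sum>e\<in>UNIV. g x $ j $ e * (riem_up g e k l m x + riem_up g e l m k x + riem_up g e m k l x))"
    unfolding riem_def by (simp add: sum.distrib distrib_left)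
  then show ?thesis using riem_up_bianchi[OF x] by simp
qed

lemma pd_pd_metric: "x \<in> U \<Longrightarrow> pd l (pd m (\<lambda>y. g y $ j $ k)) x =
  (\<Sum>p\<in>UNIV. pd l (christ g p m j) x * g x $ p $ k + pd l (christ g p m k) x * g x $ j $ p)
  + (\<Sum>p\<in>UNIV. \<Sum>q\<in>UNIV. christ g p m j x * christ g q l p x * g x $ q $ k
       + christ g p m j x * christ g q l k x * g x $ p $ q
       + christ g p m k x * christ g q l j x * g x $ q $ p
       + christ g p m k x * christ g q l p x * g x $ j $ q)"
proof -
  assume x: "x \<in> U"
  have "pd l (pd m (\<lambda>y. g y $ j $ k)) x =
     pd l (\<lambda>y. \<Sum>p\<in>UNIV. christ g p m j y * g y $ p $ k + christ g p m k y * g y $ j $ p) x"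
    by (rule pd_cong_open[OF open_U x]) (simp add: pd_metric)
  also have "\<dots> = (\<Sum>p\<in>UNIV. pd l (christ g p m j) x * g x $ p $ k + christ g p m j x * pd l (\<lambda>y. g y $ p $ k) x
       + (pd l (christ g p m k) x * g x $ j $ p + christ g p m k x * pd l (\<lambda>y. g y $ j $ p) x))"
    using x by (simp add: pd_sum pd_add pd_mult differentiable_christ differentiable_metric)
  also have "\<dots> = (\<Sum>p\<in>UNIV. pd l (christ g p m j) x * g x $ p $ k + pd l (christ g p m k) x * g x $ j $ p)
     + (\<Sum>p\<in>UNIV. christ g p m j x * pd l (\<lambda>y. g y $ p $ k) x + christ g p m k x * pd l (\<lambda>y. g y $ j $ p) x)"
    by (simp add: sum.distrib[symmetric] algebra_simps)
  also have "(\<Sum>p\<in>UNIV. christ g p m j x * pd l (\<lambda>y. g y $ p $ k) x + christ g p m k x * pd l (\<lambda>y. g y $ j $ p) x)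
     = (\<Sum>p\<in>UNIV. \<Sum>q\<in>UNIV. christ g p m j x * christ g q l p x * g x $ q $ k
       + christ g p m j x * christ g q l k x * g x $ p $ q
       + christ g p m k x * christ g q l j x * g x $ q $ p
       + christ g p m k x * christ g q l p x * g x $ j $ q)"
    unfolding pd_metric[OF x] by (simp add: sum_distrib_left sum.distrib[symmetric] algebra_simps)
  finally show ?thesis .
qed

lemma riem_expand: "riem g j k l m x =
   (\<Sum>e\<in>UNIV. g x $ j $ e * pd l (christ g e k m) x - g x $ j $ e * pd m (christ g e k l) x)
   + (\<Sum>q\<in>UNIV. \<Sum>p\<in>UNIV. g x $ j $ q * christ g q p l x * christ g p k m x
        - g x $ j $ q * christ g q p m x * christ g p k l x)"
  unfolding riem_def riem_up_def
  by (simp add: distrib_left right_diff_distrib sum.distrib sum_distrib_left sum_subtractf mult_ac)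

lemma riem_symmetrized_12_christ: "x \<in> U \<Longrightarrow> riem g j k l m x + riem g k j l m x =
    (\<Sum>p\<in>UNIV. pd l (christ g p m j) x * g x $ p $ k + pd l (christ g p m k) x * g x $ j $ p
       - pd m (christ g p l j) x * g x $ p $ k - pd m (christ g p l k) x * g x $ j $ p)
    + (\<Sum>q\<in>UNIV. \<Sum>p\<in>UNIV. christ g p m j x * christ g q l p x * g x $ q $ k
       + christ g p m k x * christ g q l p x * g x $ j $ q
       - christ g p l j x * christ g q m p x * g x $ q $ k - christ g p l k x * christ g q m p x * g x $ j $ q)"
proof -
  assume x: "x \<in> U"
  have d: "pd a (christ g q b c) x = pd a (christ g q c b) x" for a q b c
    using pd_christ_sym[OF x] by simp
  have "(\<Sum>e\<in>UNIV. g x $ j $ e * pd l (christ g e k m) x - g x $ j $ e * pd m (christ g e k l) x)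
      + (\<Sum>e\<in>UNIV. g x $ k $ e * pd l (christ g e j m) x - g x $ k $ e * pd m (christ g e j l) x)
    = (\<Sum>p\<in>UNIV. pd l (christ g p m j) x * g x $ p $ k + pd l (christ g p m k) x * g x $ j $ p
       - pd m (christ g p l j) x * g x $ p $ k - pd m (christ g p l k) x * g x $ j $ p)"
    unfolding sum.distrib[symmetric]
    by (intro sum.cong refl) (simp add: metric_sym[OF x, of k] d[of _ _ k m] d[of _ _ k l]
        d[of _ _ j m] d[of _ _ j l] algebra_simps)
  moreover have "(\<Sum>q\<in>UNIV. \<Sum>p\<in>UNIV. g x $ j $ q * christ g q p l x * christ g p k m x
        - g x $ j $ q * christ g q p m x * christ g p k l x)
      + (\<Sum>q\<in>UNIV. \<Sum>p\<in>UNIV. g x $ k $ q * christ g q p l x * christ g p j m x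
        - g x $ k $ q * christ g q p m x * christ g p j l x)
    = (\<Sum>q\<in>UNIV. \<Sum>p\<in>UNIV. christ g p m j x * christ g q l p x * g x $ q $ k
       + christ g p m k x * christ g q l p x * g x $ j $ q
       - christ g p l j x * christ g q m p x * g x $ q $ k - christ g p l k x * christ g q m p x * g x $ j $ q)"
    unfolding sum.distrib[symmetric]
    by (intro sum.cong refl) (simp add: metric_sym[OF x, of _ k] christ_sym[OF x, of _ _ l]
        christ_sym[OF x, of _ _ m] christ_sym[OF x, of _ k] christ_sym[OF x, of _ j] algebra_simps)
  ultimately show ?thesis unfolding riem_expand by linarith
qed

text \<open>The Ricci identity for the parallel tensor g.\<close>
lemma riem_symmetrized_12: "x \<in> U \<Longrightarrow> riem g j k l m x + riem g k j l m x =
    pd l (pd m (\<lambda>y. g y $ j $ k)) x - pd m (pd l (\<lambda>y. g y $ j $ k)) x"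
proof -
  assume x: "x \<in> U"
  define C where "C q a b = christ g q a b x" for q a b
  define gg where "gg a b = g x $ a $ b" for a b
  define F1 where "F1 p q = C p m j * C q l p * gg q k + C p m k * C q l p * gg j q
      - C p l j * C q m p * gg q k - C p l k * C q m p * gg j q" for p q
  define F2 where "F2 p q = C p m j * C q l k * gg p q + C p m k * C q l j * gg q p
      - C p l j * C q m k * gg p q - C p l k * C q m j * gg q p" for p q
  have "(\<Sum>p\<in>UNIV. \<Sum>q\<in>UNIV. F2 p q) = 0"
    using metric_sym[OF x] by (intro sum_sum_antisym_eq_0) (simp add: F2_def gg_def algebra_simps)
  moreover have "(\<Sum>p\<in>UNIV. \<Sum>q\<in>UNIV. christ g p m j x * christ g q l p x * g x $ q $ k
       + christ g p m j x * christ g q l k x * g x $ p $ q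
       + christ g p m k x * christ g q l j x * g x $ q $ p
       + christ g p m k x * christ g q l p x * g x $ j $ q)
     - (\<Sum>p\<in>UNIV. \<Sum>q\<in>UNIV. christ g p l j x * christ g q m p x * g x $ q $ k
       + christ g p l j x * christ g q m k x * g x $ p $ q
       + christ g p l k x * christ g q m j x * g x $ q $ p
       + christ g p l k x * christ g q m p x * g x $ j $ q)
     = (\<Sum>p\<in>UNIV. \<Sum>q\<in>UNIV. F1 p q) + (\<Sum>p\<in>UNIV. \<Sum>q\<in>UNIV. F2 p q)"
    unfolding sum_subtractf[symmetric] sum.distrib[symmetric]
    by (intro sum.cong refl) (simp add: F1_def F2_def C_def gg_def)
  moreover have "(\<Sum>q\<in>UNIV. \<Sum>p\<in>UNIV. F1 p q) = (\<Sum>p\<in>UNIV. \<Sum>q\<in>UNIV. F1 p q)"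
    by (rule sum.swap)
  moreover have "(\<Sum>p\<in>UNIV. pd l (christ g p m j) x * g x $ p $ k + pd l (christ g p m k) x * g x $ j $ p)
      - (\<Sum>p\<in>UNIV. pd m (christ g p l j) x * g x $ p $ k + pd m (christ g p l k) x * g x $ j $ p)
    = (\<Sum>p\<in>UNIV. pd l (christ g p m j) x * g x $ p $ k + pd l (christ g p m k) x * g x $ j $ p
       - pd m (christ g p l j) x * g x $ p $ k - pd m (christ g p l k) x * g x $ j $ p)"
    unfolding sum_subtractf[symmetric] by (intro sum.cong refl) simp
  ultimately show ?thesis
    unfolding riem_symmetrized_12_christ[OF x] pd_pd_metric[OF x] F1_def C_def gg_def by linarith
qed

lemma riem_antisym_12: "x \<in> U \<Longrightarrow> riem g j k l m x = - riem g k j l m x"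
  using riem_symmetrized_12[of x j k l m] smooth_on_pd_pd_commute[OF open_U _ smooth_metric, of x l m j k]
  by linarith

lemma riem_pair_sym: "x \<in> U \<Longrightarrow> riem g j k l m x = riem g l m j k x"
proof -
  assume x: "x \<in> U"
  define R where "R a b c d = riem g a b c d x" for a b c d
  have a1: "R a b c d = - R b a c d" for a b c d unfolding R_def by (rule riem_antisym_12[OF x])
  have a2: "R a b c d = - R a b d c" for a b c d unfolding R_def by (rule riem_antisym_34)
  have b: "R a b c d + R a c d b + R a d b c = 0" for a b c d unfolding R_def by (rule riem_bianchi[OF x])
  have "R j k l m = R l m j k"
    using b[of j m l k] b[of k m j l] b[of k m l j] b[of l m j k] b[of m l k j]
      a1[of k j l m] a1[of k j m l] a1[of l j k m] a1[of l k j m] a1[of l k m j] a1[of m j l k]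
      a1[of m k j l] a1[of m k l j] a1[of m l j k] a2[of l k m j] a2[of m k l j] a2[of m l k j]
    by linarith
  then show ?thesis unfolding R_def .
qed

lemma ricci_sym: "x \<in> U \<Longrightarrow> ricci g k l x = ricci g l k x"
proof -
  assume x: "x \<in> U"
  have "riem g m l k p x = riem g p k l m x" for m p
    using riem_pair_sym[OF x, of m l k p] riem_antisym_12[OF x, of k p m l] riem_antisym_34[of p k m l x]
    by linarith
  then have "(\<Sum>m\<in>UNIV. \<Sum>p\<in>UNIV. ginv g x m p * riem g m l k p x)
      = (\<Sum>p\<in>UNIV. \<Sum>m\<in>UNIV. ginv g x p m * riem g p k l m x)"
    by (subst sum.swap) (simp add: ginv_sym[OF x])
  then show ?thesis unfolding ricci_def by simp
qed

lemma weyl_antisym_12: "x \<in> U \<Longrightarrow> weyl g j k l m x = - weyl g k j l m x"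
  unfolding weyl_def Let_def riem_antisym_12[of x k j l m] by (simp add: algebra_simps)

lemma weyl_antisym_34: "x \<in> U \<Longrightarrow> weyl g j k l m x = - weyl g j k m l x"
  unfolding weyl_def Let_def riem_antisym_34[of j k m l x]
  by (simp add: algebra_simps metric_sym ricci_sym)

lemma weyl_pair_sym: "x \<in> U \<Longrightarrow> weyl g j k l m x = weyl g l m j k x"
  unfolding weyl_def Let_def riem_pair_sym[of x l m j k]
  by (simp add: algebra_simps metric_sym ricci_sym)

lemma weyl_bianchi: "x \<in> U \<Longrightarrow> weyl g j k l m x + weyl g j l m k x + weyl g j m k l x = 0"
proof -
  assume x: "x \<in> U"
  have "weyl g j k l m x + weyl g j l m k x + weyl g j m k l x =
     riem g j k l m x + riem g j l m k x + riem g j m k l x"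
    unfolding weyl_def Let_def by (simp add: algebra_simps metric_sym[OF x] ricci_sym[OF x])
  then show ?thesis using riem_bianchi[OF x] by simp
qed

lemma weyl_bianchi_123: "x \<in> U \<Longrightarrow> weyl g a b c m x + weyl g b c a m x + weyl g c a b m x = 0"
  using weyl_pair_sym[of x a b c m] weyl_pair_sym[of x b c a m] weyl_pair_sym[of x c a b m]
    weyl_antisym_12[of x c m a b] weyl_antisym_12[of x a m b c] weyl_antisym_12[of x b m c a]
    weyl_bianchi[of x m a b c]
  by linarith

text \<open>The coefficients 1/(n-2) and R/((n-1)(n-2)) of the Weyl tensor are exactly those that
  cancel the traces of R. This needs n \<ge> 3: for n = 2 division by zero makes them 0.\<close>
lemma weyl_trace_14:
  assumes x: "x \<in> U" and n: "CARD('n) \<ge> 3"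
  shows "(\<Sum>j\<in>UNIV. \<Sum>m\<in>UNIV. ginv g x j m * weyl g j k l m x) = 0"
proof -
  define n where "n = real CARD('n)"
  define G where "G a b = ginv g x a b" for a b
  define gg where "gg a b = g x $ a $ b" for a b
  define Ric where "Ric a b = ricci g a b x" for a b
  define s where "s = scal g x"
  define a where "a = 1 / (n - 2)"
  define b where "b = 1 / ((n - 1) * (n - 2))"
  note tr = ginv_contract_metric[OF x, folded G_def gg_def]
  have tr_g: "(\<Sum>j\<in>UNIV. \<Sum>m\<in>UNIV. G j m * gg m j) = n"
    unfolding G_def gg_def n_def by (simp add: ginv_metric[OF x])
  have tr_Ric: "(\<Sum>j\<in>UNIV. \<Sum>m\<in>UNIV. G j m * Ric m j) = s"
    unfolding G_def Ric_def s_def scal_def by (subst sum.swap) (simp add: ginv_sym[OF x])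
  have w: "weyl g j k l m x = riem g j k l m x + a * (gg m j * Ric k l - gg m k * Ric j l + Ric m j * gg k l
      - Ric m k * gg j l) - s * b * (gg m j * gg k l - gg m k * gg j l)" for j m
    unfolding weyl_def Let_def a_def b_def gg_def Ric_def s_def n_def by simp
  have "(\<Sum>j\<in>UNIV. \<Sum>m\<in>UNIV. ginv g x j m * weyl g j k l m x) =
     (\<Sum>j\<in>UNIV. \<Sum>m\<in>UNIV. G j m * riem g j k l m x)
     + a * ((\<Sum>j\<in>UNIV. \<Sum>m\<in>UNIV. G j m * gg m j) * Ric k l
        - (\<Sum>j\<in>UNIV. \<Sum>m\<in>UNIV. G j m * (gg m k * Ric j l))
        + (\<Sum>j\<in>UNIV. \<Sum>m\<in>UNIV. G j m * Ric m j) * gg k l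
        - (\<Sum>j\<in>UNIV. \<Sum>m\<in>UNIV. G j m * (Ric m k * gg j l)))
     - s * b * ((\<Sum>j\<in>UNIV. \<Sum>m\<in>UNIV. G j m * gg m j) * gg k l
        - (\<Sum>j\<in>UNIV. \<Sum>m\<in>UNIV. G j m * (gg m k * gg j l)))"
    unfolding w G_def
    by (simp add: sum.distrib sum_subtractf sum_distrib_left sum_distrib_right algebra_simps)
  also have "\<dots> = - Ric k l + a * (n * Ric k l - Ric k l + s * gg k l - Ric l k) - s * b * (n * gg k l - gg k l)"
    unfolding tr tr_g tr_Ric by (simp add: G_def Ric_def ricci_def)
  also have "\<dots> = - Ric k l * (1 - a * (n - 2)) + s * gg k l * (a - b * (n - 1))"
    using ricci_sym[OF x, of l k] unfolding Ric_def by (simp add: algebra_simps)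
  also have "\<dots> = 0"
    using n unfolding a_def b_def n_def by simp
  finally show ?thesis .
qed

end

section \<open>Covariant derivatives of contractions\<close>

lemma pd_eq_nabla1: "pd i (\<lambda>y. A y p) x = nabla1 g A i p x + (\<Sum>q\<in>UNIV. christ g q i p x * A x q)"
  unfolding nabla1_def by simp

lemma pd_eq_nabla4: "pd i (T j k l m) x = nabla4 g T i j k l m x
   + (\<Sum>q\<in>UNIV. christ g q i j x * T q k l m x + christ g q i k x * T j q l m x
                 + christ g q i l x * T j k q m x + christ g q i m x * T j k l q x)"
  unfolding nabla4_def by simp

context pseudo_riemannian_chart
begin

text \<open>The inverse metric is parallel.\<close>
lemma ginv_parallel:
  assumes x: "x \<in> U"
  shows "(\<Sum>a\<in>UNIV. \<Sum>b\<in>UNIV. pd i (\<lambda>y. ginv g y a b) x * F a b)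
    + (\<Sum>a\<in>UNIV. \<Sum>b\<in>UNIV. ginv g x a b *
        (\<Sum>q\<in>UNIV. christ g q i a x * F q b + christ g q i b x * F a q)) = 0"
proof -
  have "(\<Sum>a\<in>UNIV. \<Sum>b\<in>UNIV. \<Sum>q\<in>UNIV. ginv g x a b * (christ g q i a x * F q b))
      = (\<Sum>a\<in>UNIV. \<Sum>b\<in>UNIV. \<Sum>q\<in>UNIV. christ g a i q x * ginv g x q b * F a b)"
    by (subst sum_swap_1_3) (simp add: mult_ac)
  moreover have "(\<Sum>a\<in>UNIV. \<Sum>b\<in>UNIV. \<Sum>q\<in>UNIV. ginv g x a b * (christ g q i b x * F a q))
      = (\<Sum>a\<in>UNIV. \<Sum>b\<in>UNIV. \<Sum>q\<in>UNIV. christ g b i q x * ginv g x a q * F a b)"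
    by (rule sum.cong[OF refl], subst sum.swap) (simp add: mult_ac)
  moreover have "(\<Sum>a\<in>UNIV. \<Sum>b\<in>UNIV. pd i (\<lambda>y. ginv g y a b) x * F a b)
      = - (\<Sum>a\<in>UNIV. \<Sum>b\<in>UNIV. \<Sum>q\<in>UNIV. christ g a i q x * ginv g x q b * F a b)
        - (\<Sum>a\<in>UNIV. \<Sum>b\<in>UNIV. \<Sum>q\<in>UNIV. christ g b i q x * ginv g x a q * F a b)"
  proof -
    have "pd i (\<lambda>y. ginv g y a b) x * F a b = - (\<Sum>q\<in>UNIV. christ g a i q x * ginv g x q b * F a b)
        - (\<Sum>q\<in>UNIV. christ g b i q x * ginv g x a q * F a b)" for a b
      unfolding pd_ginv[OF x] by (simp add: sum.distrib sum_distrib_left sum_distrib_right algebra_simps)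
    then show ?thesis by (simp add: sum_subtractf sum_negf)
  qed
  ultimately show ?thesis
    by (simp add: distrib_left sum.distrib sum_distrib_left)
qed

lemma pd_trace_24:
  assumes x: "x \<in> U" and dT: "\<And>a b c d. T a b c d differentiable (at x)"
  shows "pd j (\<lambda>y. \<Sum>i\<in>UNIV. \<Sum>m\<in>UNIV. ginv g y i m * T k i l m y) x =
     (\<Sum>i\<in>UNIV. \<Sum>m\<in>UNIV. ginv g x i m * nabla4 g T j k i l m x)
     + (\<Sum>p\<in>UNIV. christ g p j k x * (\<Sum>i\<in>UNIV. \<Sum>m\<in>UNIV. ginv g x i m * T p i l m x)
                 + christ g p j l x * (\<Sum>i\<in>UNIV. \<Sum>m\<in>UNIV. ginv g x i m * T k i p m x))"
proof -
  define G where "G a b = ginv g x a b" for a b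
  define Ch where "Ch a b c = christ g a b c x" for a b c
  have "(\<Sum>i\<in>UNIV. \<Sum>m\<in>UNIV. \<Sum>p\<in>UNIV. G i m * (Ch p j k * T p i l m x))
      = (\<Sum>p\<in>UNIV. Ch p j k * (\<Sum>i\<in>UNIV. \<Sum>m\<in>UNIV. G i m * T p i l m x))"
    by (subst sum_rotate3[symmetric]) (simp add: sum_distrib_left mult_ac)
  moreover have "(\<Sum>i\<in>UNIV. \<Sum>m\<in>UNIV. \<Sum>p\<in>UNIV. G i m * (Ch p j l * T k i p m x))
      = (\<Sum>p\<in>UNIV. Ch p j l * (\<Sum>i\<in>UNIV. \<Sum>m\<in>UNIV. G i m * T k i p m x))"
    by (subst sum_rotate3[symmetric]) (simp add: sum_distrib_left mult_ac)
  moreover have "pd j (\<lambda>y. \<Sum>i\<in>UNIV. \<Sum>m\<in>UNIV. ginv g y i m * T k i l m y) x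
      = (\<Sum>i\<in>UNIV. \<Sum>m\<in>UNIV. pd j (\<lambda>y. ginv g y i m) x * T k i l m x + G i m * pd j (T k i l m) x)"
    unfolding G_def using x dT
    by (simp add: pd_sum pd_mult differentiable_ginv differentiable_sum differentiable_mult)
  moreover note ginv_parallel[OF x, of j "\<lambda>i m. T k i l m x", folded G_def Ch_def]
  ultimately show ?thesis
    unfolding pd_eq_nabla4[where g=g and T=T] G_def[symmetric] Ch_def[symmetric]
    by (simp add: distrib_left sum.distrib sum_distrib_left algebra_simps)
qed

lemma pd_contract_4:
  assumes x: "x \<in> U" and dB: "\<And>p. (\<lambda>y. B y p) differentiable (at x)"
    and dT: "\<And>a b c d. T a b c d differentiable (at x)"
  shows "pd i (\<lambda>y. \<Sum>m\<in>UNIV. \<Sum>p\<in>UNIV. ginv g y m p * B y p * T j k l m y) x =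
     (\<Sum>m\<in>UNIV. \<Sum>p\<in>UNIV. ginv g x m p * (nabla1 g B i p x * T j k l m x + B x p * nabla4 g T i j k l m x))
     + (\<Sum>q\<in>UNIV. christ g q i j x * (\<Sum>m\<in>UNIV. \<Sum>p\<in>UNIV. ginv g x m p * B x p * T q k l m x)
        + christ g q i k x * (\<Sum>m\<in>UNIV. \<Sum>p\<in>UNIV. ginv g x m p * B x p * T j q l m x)
        + christ g q i l x * (\<Sum>m\<in>UNIV. \<Sum>p\<in>UNIV. ginv g x m p * B x p * T j k q m x))"
proof -
  define G where "G a b = ginv g x a b" for a b
  define Ch where "Ch a b c = christ g a b c x" for a b c
  have "(\<Sum>m\<in>UNIV. \<Sum>p\<in>UNIV. \<Sum>q\<in>UNIV. G m p * B x p * (Ch q i j * T q k l m x))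
      = (\<Sum>q\<in>UNIV. Ch q i j * (\<Sum>m\<in>UNIV. \<Sum>p\<in>UNIV. G m p * B x p * T q k l m x))"
    by (subst sum_rotate3[symmetric]) (simp add: sum_distrib_left mult_ac)
  moreover have "(\<Sum>m\<in>UNIV. \<Sum>p\<in>UNIV. \<Sum>q\<in>UNIV. G m p * B x p * (Ch q i k * T j q l m x))
      = (\<Sum>q\<in>UNIV. Ch q i k * (\<Sum>m\<in>UNIV. \<Sum>p\<in>UNIV. G m p * B x p * T j q l m x))"
    by (subst sum_rotate3[symmetric]) (simp add: sum_distrib_left mult_ac)
  moreover have "(\<Sum>m\<in>UNIV. \<Sum>p\<in>UNIV. \<Sum>q\<in>UNIV. G m p * B x p * (Ch q i l * T j k q m x))
      = (\<Sum>q\<in>UNIV. Ch q i l * (\<Sum>m\<in>UNIV. \<Sum>p\<in>UNIV. G m p * B x p * T j k q m x))"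
    by (subst sum_rotate3[symmetric]) (simp add: sum_distrib_left mult_ac)
  moreover have "pd i (\<lambda>y. \<Sum>m\<in>UNIV. \<Sum>p\<in>UNIV. ginv g y m p * B y p * T j k l m y) x
      = (\<Sum>m\<in>UNIV. \<Sum>p\<in>UNIV. pd i (\<lambda>y. ginv g y m p) x * (B x p * T j k l m x)
           + G m p * (pd i (\<lambda>y. B y p) x * T j k l m x + B x p * pd i (T j k l m) x))"
    unfolding G_def using x dB dT
    by (simp add: pd_sum pd_mult differentiable_ginv differentiable_sum differentiable_mult mult.assoc)
  moreover note ginv_parallel[OF x, of i "\<lambda>m p. B x p * T j k l m x", folded G_def Ch_def]
  ultimately show ?thesis
    unfolding pd_eq_nabla1[where g=g] pd_eq_nabla4[where g=g and T=T] G_def[symmetric] Ch_def[symmetric]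
    by (simp add: distrib_left distrib_right sum.distrib sum_distrib_left sum_distrib_right algebra_simps)
qed

lemma trace_24_nabla4_eq_0:
  assumes x: "x \<in> U" and dT: "\<And>a b c d. T a b c d differentiable (at x)"
    and tr: "\<And>y k l. y \<in> U \<Longrightarrow> (\<Sum>i\<in>UNIV. \<Sum>m\<in>UNIV. ginv g y i m * T k i l m y) = 0"
  shows "(\<Sum>i\<in>UNIV. \<Sum>m\<in>UNIV. ginv g x i m * nabla4 g T j k i l m x) = 0"
proof -
  have "pd j (\<lambda>y. \<Sum>i\<in>UNIV. \<Sum>m\<in>UNIV. ginv g y i m * T k i l m y) x = 0"
    by (rule pd_eq_0_on_open[OF open_U x tr])
  then show ?thesis using pd_trace_24[where T=T and j=j and k=k and l=l, OF x dT] tr[OF x] by simp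
qed

lemma contract_4_nabla_eq_0:
  assumes x: "x \<in> U" and dB: "\<And>p. (\<lambda>y. B y p) differentiable (at x)"
    and dT: "\<And>a b c d. T a b c d differentiable (at x)"
    and c: "\<And>y j k l. y \<in> U \<Longrightarrow> (\<Sum>m\<in>UNIV. \<Sum>p\<in>UNIV. ginv g y m p * B y p * T j k l m y) = 0"
  shows "(\<Sum>m\<in>UNIV. \<Sum>p\<in>UNIV. ginv g x m p * (nabla1 g B i p x * T j k l m x + B x p * nabla4 g T i j k l m x)) = 0"
proof -
  have "pd i (\<lambda>y. \<Sum>m\<in>UNIV. \<Sum>p\<in>UNIV. ginv g y m p * B y p * T j k l m y) x = 0"
    by (rule pd_eq_0_on_open[OF open_U x c])
  then show ?thesis
    using pd_contract_4[where B=B and T=T and i=i and j=j and k=k and l=l, OF x dB dT] c[OF x] by simp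
qed

end

section \<open>Conformally quasi-recurrent charts\<close>

definition raise1 :: "'n::finite metric \<Rightarrow> (real^'n \<Rightarrow> 'n \<Rightarrow> real) \<Rightarrow> real^'n \<Rightarrow> 'n \<Rightarrow> real" where
  "raise1 g A x a = (\<Sum>p\<in>UNIV. ginv g x a p * A x p)"

definition raise4 :: "'n::finite metric \<Rightarrow> ('n \<Rightarrow> 'n \<Rightarrow> 'n \<Rightarrow> 'n \<Rightarrow> real^'n \<Rightarrow> real)
     \<Rightarrow> real^'n \<Rightarrow> 'n \<Rightarrow> 'n \<Rightarrow> 'n \<Rightarrow> 'n \<Rightarrow> real" where
  "raise4 g T x a b c d = (\<Sum>a'\<in>UNIV. \<Sum>b'\<in>UNIV. \<Sum>c'\<in>UNIV. \<Sum>d'\<in>UNIV.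
     ginv g x a a' * ginv g x b b' * ginv g x c c' * ginv g x d d' * T a' b' c' d' x)"

locale cqr_chart = pseudo_riemannian_chart U g for U :: "(real^'n::finite) set" and g +
  fixes A :: "real^'n \<Rightarrow> 'n \<Rightarrow> real"
  assumes cqr: "CQR U g A" and dim: "CARD('n) \<ge> 3"
begin

lemma smooth_A: "smooth_on U (\<lambda>y. A y p)"
  using cqr unfolding CQR_def by blast

lemma nabla_weyl: "x \<in> U \<Longrightarrow> nabla4 g (weyl g) i j k l m x =
   2 * A x i * weyl g j k l m x + A x j * weyl g i k l m x + A x k * weyl g j i l m x
   + A x l * weyl g j k i m x + A x m * weyl g j k l i x"
  using cqr unfolding CQR_def by blast

lemma weyl_trace_24: "y \<in> U \<Longrightarrow> (\<Sum>i\<in>UNIV. \<Sum>m\<in>UNIV. ginv g y i m * weyl g k i l m y) = 0"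
  by (simp add: weyl_antisym_12[of y k] sum_negf weyl_trace_14[OF _ dim])

lemma A_up_contract_weyl: "y \<in> U \<Longrightarrow> (\<Sum>m\<in>UNIV. raise1 g A y m * weyl g a b c m y) = 0"
proof -
  assume y: "y \<in> U"
  define \<alpha> where "\<alpha> a b c = (\<Sum>m\<in>UNIV. raise1 g A y m * weyl g a b c m y)" for a b c
  define tr where "tr a b = (\<Sum>i\<in>UNIV. \<Sum>m\<in>UNIV. ginv g y i m * weyl g a i b m y)" for a b
  have tr0: "tr a b = 0" for a b unfolding tr_def by (rule weyl_trace_24[OF y])
  have outer: "\<alpha> k j l = - \<alpha> l j k" for k j l
  proof -
    have "(\<Sum>i\<in>UNIV. \<Sum>m\<in>UNIV. ginv g y i m * nabla4 g (weyl g) j k i l m y) = 0"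
      by (rule trace_24_nabla4_eq_0[where T="weyl g", OF y differentiable_weyl[OF y] weyl_trace_24])
    moreover have "(\<Sum>i\<in>UNIV. \<Sum>m\<in>UNIV. ginv g y i m * (A y i * weyl g k j l m y)) = \<alpha> k j l"
      unfolding \<alpha>_def raise1_def
      by (subst sum.swap) (simp add: sum_distrib_left sum_distrib_right ginv_sym[OF y, of _ m for m] mult_ac)
    moreover have "(\<Sum>i\<in>UNIV. \<Sum>m\<in>UNIV. ginv g y i m * (A y m * weyl g k i l j y)) = \<alpha> l j k"
      unfolding \<alpha>_def raise1_def
      by (simp add: sum_distrib_left sum_distrib_right weyl_pair_sym[OF y, of k _ l j] mult_ac)
    moreover have "(\<Sum>i\<in>UNIV. \<Sum>m\<in>UNIV. ginv g y i m * nabla4 g (weyl g) j k i l m y) =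
        2 * A y j * tr k l + A y k * tr j l
        + (\<Sum>i\<in>UNIV. \<Sum>m\<in>UNIV. ginv g y i m * (A y i * weyl g k j l m y))
        + A y l * tr k j
        + (\<Sum>i\<in>UNIV. \<Sum>m\<in>UNIV. ginv g y i m * (A y m * weyl g k i l j y))"
      unfolding nabla_weyl[OF y] tr_def
      by (simp add: sum.distrib distrib_left sum_distrib_left mult_ac)
    ultimately show ?thesis using tr0 by simp
  qed
  have first: "\<alpha> a b c = - \<alpha> b a c" for a b c
    unfolding \<alpha>_def by (simp add: weyl_antisym_12[OF y, of a b] sum_negf)
  have "\<alpha> a b c + \<alpha> b c a + \<alpha> c a b = 0"
    using weyl_bianchi_123[OF y] unfolding \<alpha>_def by (simp add: sum.distrib[symmetric] distrib_left[symmetric])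
  (* alpha is totally antisymmetric, so its cyclic sum is 3 * alpha a b c *)
  then have "\<alpha> a b c = 0"
    using first[of b c a] first[of a b c] outer[of c b a] outer[of c a b] by linarith
  then show ?thesis unfolding \<alpha>_def .
qed

lemma A_up_contract_weyl_slots:
  assumes y: "y \<in> U"
  shows "(\<Sum>q\<in>UNIV. raise1 g A y q * weyl g q b c d y) = 0"
    and "(\<Sum>q\<in>UNIV. raise1 g A y q * weyl g a q c d y) = 0"
    and "(\<Sum>q\<in>UNIV. raise1 g A y q * weyl g a b q d y) = 0"
    and "(\<Sum>q\<in>UNIV. raise1 g A y q * weyl g a b c q y) = 0"
proof -
  show slot4: "(\<Sum>q\<in>UNIV. raise1 g A y q * weyl g a b c q y) = 0" for a b c
    by (rule A_up_contract_weyl[OF y])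
  show slot3: "(\<Sum>q\<in>UNIV. raise1 g A y q * weyl g a b q d y) = 0" for a b d
    using slot4[of a b d] by (simp add: weyl_antisym_34[OF y, of a b _ d] sum_negf)
  show slot1: "(\<Sum>q\<in>UNIV. raise1 g A y q * weyl g q b c d y) = 0" for b c d
    using slot3[of c d b] by (simp add: weyl_pair_sym[OF y, of _ b c d])
  show "(\<Sum>q\<in>UNIV. raise1 g A y q * weyl g a q c d y) = 0"
    using slot1[of a c d] by (simp add: weyl_antisym_12[OF y, of a] sum_negf)
qed

lemma weyl_contract_A: "y \<in> U \<Longrightarrow> (\<Sum>m\<in>UNIV. \<Sum>p\<in>UNIV. ginv g y m p * A y p * weyl g j k l m y) = 0"
  using A_up_contract_weyl unfolding raise1_def by (simp add: sum_distrib_right)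

lemma A_up_contract_nabla_weyl:
  assumes x: "x \<in> U"
  defines "a2 \<equiv> (\<Sum>q\<in>UNIV. A x q * raise1 g A x q)"
  shows "(\<Sum>q\<in>UNIV. raise1 g A x q * nabla4 g (weyl g) q j k l m x) = 2 * a2 * weyl g j k l m x"
    and "(\<Sum>q\<in>UNIV. raise1 g A x q * nabla4 g (weyl g) i q k l m x) = a2 * weyl g i k l m x"
    and "(\<Sum>q\<in>UNIV. raise1 g A x q * nabla4 g (weyl g) i j q l m x) = a2 * weyl g j i l m x"
    and "(\<Sum>q\<in>UNIV. raise1 g A x q * nabla4 g (weyl g) i j k q m x) = a2 * weyl g j k i m x"
    and "(\<Sum>q\<in>UNIV. raise1 g A x q * nabla4 g (weyl g) i j k l q x) = a2 * weyl g j k l i x"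
proof -
  have scale: "(\<Sum>q\<in>UNIV. A x q * (raise1 g A x q * c)) = c * a2"
    "(\<Sum>q\<in>UNIV. A x q * (2 * (raise1 g A x q * c))) = a2 * (2 * c)" for c
    unfolding a2_def by (simp_all add: sum_distrib_left sum_distrib_right mult_ac)
  show "(\<Sum>q\<in>UNIV. raise1 g A x q * nabla4 g (weyl g) q j k l m x) = 2 * a2 * weyl g j k l m x"
    "(\<Sum>q\<in>UNIV. raise1 g A x q * nabla4 g (weyl g) i q k l m x) = a2 * weyl g i k l m x"
    "(\<Sum>q\<in>UNIV. raise1 g A x q * nabla4 g (weyl g) i j q l m x) = a2 * weyl g j i l m x"
    "(\<Sum>q\<in>UNIV. raise1 g A x q * nabla4 g (weyl g) i j k q m x) = a2 * weyl g j k i m x"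
    "(\<Sum>q\<in>UNIV. raise1 g A x q * nabla4 g (weyl g) i j k l q x) = a2 * weyl g j k l i x"
    using A_up_contract_weyl_slots[OF x] unfolding nabla_weyl[OF x]
    by (simp_all add: sum.distrib distrib_left sum_distrib_left[symmetric] sum_distrib_right[symmetric]
        scale mult_ac)
qed

lemma nabla_A_contract_weyl: "x \<in> U \<Longrightarrow>
   (\<Sum>m\<in>UNIV. (\<Sum>p\<in>UNIV. ginv g x m p * nabla1 g A i p x) * weyl g j k l m x)
   + (\<Sum>m\<in>UNIV. \<Sum>p\<in>UNIV. ginv g x m p * A x p * A x m) * weyl g j k l i x = 0"
proof -
  assume x: "x \<in> U"
  have "(\<Sum>m\<in>UNIV. \<Sum>p\<in>UNIV. ginv g x m p *
      (nabla1 g A i p x * weyl g j k l m x + A x p * nabla4 g (weyl g) i j k l m x)) = 0"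
    by (rule contract_4_nabla_eq_0[where B=A and T="weyl g", OF x
          smooth_on_differentiable[OF open_U smooth_A x] differentiable_weyl[OF x] weyl_contract_A])
  moreover have "(\<Sum>m\<in>UNIV. \<Sum>p\<in>UNIV. ginv g x m p *
      (nabla1 g A i p x * weyl g j k l m x + A x p * nabla4 g (weyl g) i j k l m x))
    = (\<Sum>m\<in>UNIV. (\<Sum>p\<in>UNIV. ginv g x m p * nabla1 g A i p x) * weyl g j k l m x)
      + (\<Sum>q\<in>UNIV. raise1 g A x q * nabla4 g (weyl g) i j k l q x)"
    unfolding raise1_def by (simp add: distrib_left sum.distrib sum_distrib_left sum_distrib_right mult_ac)
  moreover have "(\<Sum>q\<in>UNIV. A x q * raise1 g A x q) = (\<Sum>m\<in>UNIV. \<Sum>p\<in>UNIV. ginv g x m p * A x p * A x m)"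
    unfolding raise1_def by (simp add: sum_distrib_left mult_ac)
  ultimately show ?thesis using A_up_contract_nabla_weyl(5)[OF x] by simp
qed

lemma nabla_A_weyl_compatible: "x \<in> U \<Longrightarrow>
   (\<Sum>m\<in>UNIV. \<Sum>p\<in>UNIV. ginv g x m p *
      (nabla1 g A i m x * weyl g j k l p x + nabla1 g A j m x * weyl g k i l p x
       + nabla1 g A k m x * weyl g i j l p x)) = 0"
proof -
  assume x: "x \<in> U"
  define a2 where "a2 = (\<Sum>m\<in>UNIV. \<Sum>p\<in>UNIV. ginv g x m p * A x p * A x m)"
  have one: "(\<Sum>m\<in>UNIV. \<Sum>p\<in>UNIV. ginv g x m p * nabla1 g A a m x * weyl g b c l p x)
      = - a2 * weyl g b c l a x" for a b c
  proof -
    have "(\<Sum>m\<in>UNIV. \<Sum>p\<in>UNIV. ginv g x m p * nabla1 g A a m x * weyl g b c l p x)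
        = (\<Sum>p\<in>UNIV. (\<Sum>m\<in>UNIV. ginv g x p m * nabla1 g A a m x) * weyl g b c l p x)"
      by (subst sum.swap) (simp add: sum_distrib_right ginv_sym[OF x, of _ p for p])
    then show ?thesis using nabla_A_contract_weyl[OF x, of a b c l] unfolding a2_def by simp
  qed
  have "(\<Sum>m\<in>UNIV. \<Sum>p\<in>UNIV. ginv g x m p *
      (nabla1 g A i m x * weyl g j k l p x + nabla1 g A j m x * weyl g k i l p x
       + nabla1 g A k m x * weyl g i j l p x))
     = - a2 * (weyl g j k l i x + weyl g k i l j x + weyl g i j l k x)"
    using one[of i j k] one[of j k i] one[of k i j]
    by (simp add: sum.distrib distrib_left algebra_simps)
  also have "\<dots> = 0"
    using weyl_pair_sym[OF x, of j k l i] weyl_pair_sym[OF x, of k i l j] weyl_pair_sym[OF x, of i j l k]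
      weyl_bianchi[OF x, of l i j k] by simp
  finally show ?thesis .
qed

lemma raise5_nabla_weyl:
  assumes x: "x \<in> U"
  defines "G \<equiv> ginv g x" and "r \<equiv> raise1 g A x" and "Cu \<equiv> raise4 g (weyl g) x"
  shows "(\<Sum>i'\<in>UNIV. \<Sum>j'\<in>UNIV. \<Sum>k'\<in>UNIV. \<Sum>l'\<in>UNIV. \<Sum>m'\<in>UNIV.
            G i i' * G j j' * G k k' * G l l' * G m m' * nabla4 g (weyl g) i' j' k' l' m' x)
    = 2 * r i * Cu j k l m + r j * Cu i k l m + r k * Cu j i l m + r l * Cu j k i m + r m * Cu j k l i"
proof -
  define C where "C = (\<lambda>a b c d. weyl g a b c d x)"
  define R where "R F = (\<Sum>i'\<in>UNIV. \<Sum>j'\<in>UNIV. \<Sum>k'\<in>UNIV. \<Sum>l'\<in>UNIV. \<Sum>m'\<in>UNIV.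
      G i i' * G j j' * G k k' * G l l' * G m m' * F i' j' k' l' m')" for F
  have "R (\<lambda>a b c d e. A x a * C b c d e) = r i * Cu j k l m"
    unfolding R_def r_def Cu_def raise1_def raise4_def G_def C_def sum_product_sum4 by (simp add: mult_ac)
  moreover have "R (\<lambda>a b c d e. A x b * C a c d e) = r j * Cu i k l m"
    unfolding R_def r_def Cu_def raise1_def raise4_def G_def C_def sum_product_sum4
    by (subst sum.swap) (simp add: mult_ac)
  moreover have "R (\<lambda>a b c d e. A x c * C b a d e) = r k * Cu j i l m"
    unfolding R_def r_def Cu_def raise1_def raise4_def G_def C_def sum_product_sum4
    by (subst sum_swap_1_3) (simp add: mult_ac)
  moreover have "R (\<lambda>a b c d e. A x d * C b c a e) = r l * Cu j k i m"
    unfolding R_def r_def Cu_def raise1_def raise4_def G_def C_def sum_product_sum4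
    by (subst sum_swap_1_4) (simp add: mult_ac)
  moreover have "R (\<lambda>a b c d e. A x e * C b c d a) = r m * Cu j k l i"
    unfolding R_def r_def Cu_def raise1_def raise4_def G_def C_def sum_product_sum4
    by (subst sum_swap_1_5) (simp add: mult_ac)
  moreover have "R (\<lambda>a b c d e. nabla4 g (weyl g) a b c d e x)
    = 2 * R (\<lambda>a b c d e. A x a * C b c d e) + R (\<lambda>a b c d e. A x b * C a c d e)
      + R (\<lambda>a b c d e. A x c * C b a d e) + R (\<lambda>a b c d e. A x d * C b c a e)
      + R (\<lambda>a b c d e. A x e * C b c d a)"
    unfolding R_def nabla_weyl[OF x] C_def by (simp add: distrib_left sum.distrib sum_distrib_left mult_ac)
  ultimately show ?thesis unfolding R_def by simp
qed

lemma nabla_weyl_contract_A_up_weyl_up: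
  assumes x: "x \<in> U"
  defines "N \<equiv> nabla4 g (weyl g)" and "r \<equiv> raise1 g A x" and "Cu \<equiv> raise4 g (weyl g) x"
    and "a2 \<equiv> (\<Sum>q\<in>UNIV. A x q * raise1 g A x q)"
    and "c2 \<equiv> (\<Sum>j\<in>UNIV. \<Sum>k\<in>UNIV. \<Sum>l\<in>UNIV. \<Sum>m\<in>UNIV. weyl g j k l m x * raise4 g (weyl g) x j k l m)"
  shows "(\<Sum>i\<in>UNIV. \<Sum>j\<in>UNIV. \<Sum>k\<in>UNIV. \<Sum>l\<in>UNIV. \<Sum>m\<in>UNIV. r i * N i j k l m x * Cu j k l m) = 2 * a2 * c2"
    and "(\<Sum>i\<in>UNIV. \<Sum>j\<in>UNIV. \<Sum>k\<in>UNIV. \<Sum>l\<in>UNIV. \<Sum>m\<in>UNIV. r j * N i j k l m x * Cu i k l m) = a2 * c2"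
    and "(\<Sum>i\<in>UNIV. \<Sum>j\<in>UNIV. \<Sum>k\<in>UNIV. \<Sum>l\<in>UNIV. \<Sum>m\<in>UNIV. r k * N i j k l m x * Cu j i l m) = a2 * c2"
    and "(\<Sum>i\<in>UNIV. \<Sum>j\<in>UNIV. \<Sum>k\<in>UNIV. \<Sum>l\<in>UNIV. \<Sum>m\<in>UNIV. r l * N i j k l m x * Cu j k i m) = a2 * c2"
    and "(\<Sum>i\<in>UNIV. \<Sum>j\<in>UNIV. \<Sum>k\<in>UNIV. \<Sum>l\<in>UNIV. \<Sum>m\<in>UNIV. r m * N i j k l m x * Cu j k l i) = a2 * c2"
proof -
  have contr: "(\<Sum>q\<in>UNIV. r q * N q j k l m x) = 2 * a2 * weyl g j k l m x"
    "(\<Sum>q\<in>UNIV. r q * N i q k l m x) = a2 * weyl g i k l m x"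
    "(\<Sum>q\<in>UNIV. r q * N i j q l m x) = a2 * weyl g j i l m x"
    "(\<Sum>q\<in>UNIV. r q * N i j k q m x) = a2 * weyl g j k i m x"
    "(\<Sum>q\<in>UNIV. r q * N i j k l q x) = a2 * weyl g j k l i x" for i j k l m
    unfolding N_def r_def a2_def by (rule A_up_contract_nabla_weyl[OF x])+
  have c2: "c2 = (\<Sum>j\<in>UNIV. \<Sum>k\<in>UNIV. \<Sum>l\<in>UNIV. \<Sum>m\<in>UNIV. weyl g j k l m x * Cu j k l m)"
    unfolding c2_def Cu_def ..
  note reduce = sum_distrib_right[symmetric] contr
  show "(\<Sum>i\<in>UNIV. \<Sum>j\<in>UNIV. \<Sum>k\<in>UNIV. \<Sum>l\<in>UNIV. \<Sum>m\<in>UNIV. r i * N i j k l m x * Cu j k l m) = 2 * a2 * c2"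
    by (rule trans[OF sum_rotate5], simp only: reduce, simp add: c2 sum_distrib_left mult_ac)
  show "(\<Sum>i\<in>UNIV. \<Sum>j\<in>UNIV. \<Sum>k\<in>UNIV. \<Sum>l\<in>UNIV. \<Sum>m\<in>UNIV. r j * N i j k l m x * Cu i k l m) = a2 * c2"
    by (rule trans[OF sum.cong[OF refl sum_rotate4]], simp only: reduce, simp add: c2 sum_distrib_left mult_ac)
  show "(\<Sum>i\<in>UNIV. \<Sum>j\<in>UNIV. \<Sum>k\<in>UNIV. \<Sum>l\<in>UNIV. \<Sum>m\<in>UNIV. r k * N i j k l m x * Cu j i l m) = a2 * c2"
    by (rule trans[OF trans[OF sum.cong[OF refl sum.cong[OF refl sum_rotate3]] sum.swap]], simp only: reduce, simp add: c2 sum_distrib_left mult_ac)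
  show "(\<Sum>i\<in>UNIV. \<Sum>j\<in>UNIV. \<Sum>k\<in>UNIV. \<Sum>l\<in>UNIV. \<Sum>m\<in>UNIV. r l * N i j k l m x * Cu j k i m) = a2 * c2"
    by (rule trans[OF trans[OF sum.cong[OF refl sum.cong[OF refl sum.cong[OF refl sum.swap]]] sum_rotate3]], simp only: reduce, simp add: c2 sum_distrib_left mult_ac)
  show "(\<Sum>i\<in>UNIV. \<Sum>j\<in>UNIV. \<Sum>k\<in>UNIV. \<Sum>l\<in>UNIV. \<Sum>m\<in>UNIV. r m * N i j k l m x * Cu j k l i) = a2 * c2"
    by (rule trans[OF sum_rotate4], simp only: reduce, simp add: c2 sum_distrib_left mult_ac)
qed

lemma sq_nabla_weyl: "x \<in> U \<Longrightarrow>
           (\<Sum>i\<in>UNIV. \<Sum>j\<in>UNIV. \<Sum>k\<in>UNIV. \<Sum>l\<in>UNIV. \<Sum>m\<in>UNIV.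
             \<Sum>i'\<in>UNIV. \<Sum>j'\<in>UNIV. \<Sum>k'\<in>UNIV. \<Sum>l'\<in>UNIV. \<Sum>m'\<in>UNIV.
               ginv g x i i' * ginv g x j j' * ginv g x k k' * ginv g x l l' * ginv g x m m'
               * nabla4 g (weyl g) i j k l m x * nabla4 g (weyl g) i' j' k' l' m' x)
           = 8 * (\<Sum>i\<in>UNIV. \<Sum>p\<in>UNIV. ginv g x i p * A x i * A x p)
               * (\<Sum>j\<in>UNIV. \<Sum>k\<in>UNIV. \<Sum>l\<in>UNIV. \<Sum>m\<in>UNIV.
                   \<Sum>j'\<in>UNIV. \<Sum>k'\<in>UNIV. \<Sum>l'\<in>UNIV. \<Sum>m'\<in>UNIV.
                     ginv g x j j' * ginv g x k k' * ginv g x l l' * ginv g x m m'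
                     * weyl g j k l m x * weyl g j' k' l' m' x)"
proof -
  assume x: "x \<in> U"
  define N where "N = nabla4 g (weyl g)"
  define r where "r = raise1 g A x"
  define Cu where "Cu = raise4 g (weyl g) x"
  define S where "S F = (\<Sum>i\<in>UNIV. \<Sum>j\<in>UNIV. \<Sum>k\<in>UNIV. \<Sum>l\<in>UNIV. \<Sum>m\<in>UNIV. F i j k l m)"
    for F :: "'n \<Rightarrow> 'n \<Rightarrow> 'n \<Rightarrow> 'n \<Rightarrow> 'n \<Rightarrow> real"
  have "(\<Sum>i\<in>UNIV. \<Sum>j\<in>UNIV. \<Sum>k\<in>UNIV. \<Sum>l\<in>UNIV. \<Sum>m\<in>UNIV.
             \<Sum>i'\<in>UNIV. \<Sum>j'\<in>UNIV. \<Sum>k'\<in>UNIV. \<Sum>l'\<in>UNIV. \<Sum>m'\<in>UNIV.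
               ginv g x i i' * ginv g x j j' * ginv g x k k' * ginv g x l l' * ginv g x m m'
               * N i j k l m x * N i' j' k' l' m' x)
    = S (\<lambda>i j k l m. N i j k l m x * (2 * r i * Cu j k l m + r j * Cu i k l m + r k * Cu j i l m
         + r l * Cu j k i m + r m * Cu j k l i))"
    unfolding S_def raise5_nabla_weyl[OF x, folded r_def Cu_def N_def, symmetric]
    by (simp add: sum_distrib_left mult_ac)
  also have "\<dots> = 2 * S (\<lambda>i j k l m. r i * N i j k l m x * Cu j k l m)
      + S (\<lambda>i j k l m. r j * N i j k l m x * Cu i k l m) + S (\<lambda>i j k l m. r k * N i j k l m x * Cu j i l m)
      + S (\<lambda>i j k l m. r l * N i j k l m x * Cu j k i m) + S (\<lambda>i j k l m. r m * N i j k l m x * Cu j k l i)"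
    unfolding S_def by (simp add: distrib_left sum.distrib sum_distrib_left mult_ac)
  finally show ?thesis
    unfolding S_def N_def r_def Cu_def nabla_weyl_contract_A_up_weyl_up[OF x]
    by (simp add: raise1_def raise4_def sum_distrib_left mult_ac)
qed

end

theorem mainTheorem2:
  fixes U :: "(real^'n::finite) set" and g :: "'n metric" and A :: "real^'n \<Rightarrow> 'n \<Rightarrow> real"
  assumes "CARD('n) \<ge> 3"
    and "open U" and "connected U"
    and "pseudo_riemannian U g"
    and "CQR U g A"
  shows "(\<forall>x\<in>U. \<forall>i j k l.
           (\<Sum>m\<in>UNIV. (\<Sum>p\<in>UNIV. ginv g x m p * nabla1 g A i p x) * weyl g j k l m x)
           + (\<Sum>m\<in>UNIV. \<Sum>p\<in>UNIV. ginv g x m p * A x p * A x m) * weyl g j k l i x = 0) \<and>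
         (\<forall>x\<in>U.
           (\<Sum>i\<in>UNIV. \<Sum>j\<in>UNIV. \<Sum>k\<in>UNIV. \<Sum>l\<in>UNIV. \<Sum>m\<in>UNIV.
             \<Sum>i'\<in>UNIV. \<Sum>j'\<in>UNIV. \<Sum>k'\<in>UNIV. \<Sum>l'\<in>UNIV. \<Sum>m'\<in>UNIV.
               ginv g x i i' * ginv g x j j' * ginv g x k k' * ginv g x l l' * ginv g x m m'
               * nabla4 g (weyl g) i j k l m x * nabla4 g (weyl g) i' j' k' l' m' x)
           = 8 * (\<Sum>i\<in>UNIV. \<Sum>p\<in>UNIV. ginv g x i p * A x i * A x p)
               * (\<Sum>j\<in>UNIV. \<Sum>k\<in>UNIV. \<Sum>l\<in>UNIV. \<Sum>m\<in>UNIV.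
                   \<Sum>j'\<in>UNIV. \<Sum>k'\<in>UNIV. \<Sum>l'\<in>UNIV. \<Sum>m'\<in>UNIV.
                     ginv g x j j' * ginv g x k k' * ginv g x l l' * ginv g x m m'
                     * weyl g j k l m x * weyl g j' k' l' m' x)) \<and>
         (\<forall>x\<in>U. \<forall>i j k l.
           (\<Sum>m\<in>UNIV. \<Sum>p\<in>UNIV. ginv g x m p *
              (nabla1 g A i m x * weyl g j k l p x + nabla1 g A j m x * weyl g k i l p x
               + nabla1 g A k m x * weyl g i j l p x)) = 0)"
proof -
  interpret cqr_chart U g A
    using assms by unfold_locales auto
  show ?thesis
    using nabla_A_contract_weyl sq_nabla_weyl nabla_A_weyl_compatible by blast
qed

end
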